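(* For all $(n,i),(m,j)\in S$ we have $v_{n,i}(x-s_{m,j})=\min\{\delta(n,i),\delta(m,j)\}$. In particular, $v_{n,i}<v_s$ for all $(n,i)\in S$.
   Context: $p$ is a prime, $\mathbb F$ an algebraic closure of $\mathbb F_p$, $t$ an indeterminate, $H=\mathbb F((t^{\mathbb Q}))$ the Hahn field of series $\sum_{q\in\mathbb Q}a_qt^q$ ($a_q\in\mathbb F$) with well-ordered support, $K=\bigcup_{N\ge1}\mathbb F((t^{1/N}))\subset H$, and $v(\sigma)=\min\operatorname{supp}(\sigma)$ on $H$. Fix the algebraic closure $\overline K\subset H$ of $K$. For $m\ge0$, $s_m=\sum_{j\ge m}\binom{j}{m}t^{-1/p^{j+1}}$ (binomials in $\mathbb F_p$), and $s=\sum_{m\ge0}t^ms_m$. Let $S=\{(n,i)\in\mathbb Z^2: 0\le n\le i,\ p\nmid\binom in\}$ with the lexicographic order, $\delta(n,i)=n-1/p^{i+1}$, and $s_{n,i}=\sum_{m=0}^{n-1}t^ms_m+t^n\sum_{j=n}^{i-1}\binom jn t^{-1/p^{j+1}}\in\overline K$ (the truncation of $s$ consisting of its terms with exponent $<\delta(n,i)$). $v_s$ is the valuation on $\overline K[x]$ given by $v_s(g)=v(g(s))$, and $v_{n,i}$ is the depth-zero valuation on $\overline K[x]$ defined by $v_{n,i}(\sum_\ell a_\ell(x-s_{n,i})^\ell)=\min_\ell\{v(a_\ell)+\ell\,\delta(n,i)\}$. For valuations, $\mu\le\nu$ means $\mu(f)\le\nu(f)$ for all $f$, and $\mu<\nu$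 means $\mu\le\nu$ and $\mu\ne\nu$. *)

theory Defs
  imports Complex_Main "HOL-Computational_Algebra.Polynomial" "HOL-Library.Extended_Real"
begin

type_synonym 'f hser = "rat \<Rightarrow> 'f"

definition hsupp :: "'f::zero hser \<Rightarrow> rat set" where
  "hsupp a = {q. a q \<noteq> 0}"

definition well_ordered_set :: "rat set \<Rightarrow> bool" where
  "well_ordered_set A \<longleftrightarrow> (\<forall>B\<subseteq>A. B \<noteq> {} \<longrightarrow> (\<exists>m\<in>B. \<forall>x\<in>B. m \<le> x))"

definition hahn :: "'f::zero hser set" where
  "hahn = {a. well_ordered_set (hsupp a)}"

definition hzero :: "'f::zero hser" where "hzero = (\<lambda>_. 0)"
definition hone :: "'f::{zero,one} hser" where "hone = (\<lambda>q. if q = 0 then 1 else 0)"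
definition hadd :: "'f::plus hser \<Rightarrow> 'f hser \<Rightarrow> 'f hser" where "hadd a b = (\<lambda>q. a q + b q)"
definition hneg :: "'f::uminus hser \<Rightarrow> 'f hser" where "hneg a = (\<lambda>q. - a q)"

definition hmono :: "'f::zero \<Rightarrow> rat \<Rightarrow> 'f hser" where
  "hmono c e = (\<lambda>q. if q = e then c else 0)"

text \<open>Cauchy product (the index set is finite for series with well-ordered support).\<close>
definition hmul :: "'f::comm_ring_1 hser \<Rightarrow> 'f hser \<Rightarrow> 'f hser" where
  "hmul a b = (\<lambda>q. \<Sum>u\<in>{u. a u \<noteq> 0 \<and> b (q - u) \<noteq> 0}. a u * b (q - u))"

definition hpow :: "'f::comm_ring_1 hser \<Rightarrow> nat \<Rightarrow> 'f hser" where
  "hpow a n = ((hmul a) ^^ n) hone"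

definition hsum :: "('i \<Rightarrow> 'f::comm_monoid_add hser) \<Rightarrow> 'i set \<Rightarrow> 'f hser" where
  "hsum F I = (\<lambda>q. \<Sum>i\<in>{i\<in>I. F i q \<noteq> 0}. F i q)"

definition hval :: "'f::zero hser \<Rightarrow> ereal" where
  "hval a = (if a = hzero then \<infinity> else ereal (real_of_rat (LEAST q. a q \<noteq> 0)))"

definition K_set :: "'f::zero hser set" where
  "K_set = {a \<in> hahn. \<exists>N::nat. N \<ge> 1 \<and> (\<forall>q. a q \<noteq> 0 \<longrightarrow> (\<exists>k::int. q = of_int k / of_nat N))}"

text \<open>Polynomials over H as coefficient lists (lowest degree first); Horner evaluation.\<close>
definition heval :: "'f::comm_ring_1 hser list \<Rightarrow> 'f hser \<Rightarrow> 'f hser" where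
  "heval cs x = foldr (\<lambda>c acc. hadd c (hmul x acc)) cs hzero"

definition barK :: "'f::comm_ring_1 hser set" where
  "barK = {a \<in> hahn. \<exists>cs. set cs \<subseteq> K_set \<and> (\<exists>c\<in>set cs. c \<noteq> hzero) \<and> heval cs a = hzero}"

definition barK_polys :: "'f::comm_ring_1 hser list set" where
  "barK_polys = {cs. set cs \<subseteq> barK}"

definition s_m :: "nat \<Rightarrow> nat \<Rightarrow> 'f::comm_ring_1 hser" where
  "s_m p m = hsum (\<lambda>j. hmono (of_nat (j choose m)) (- 1 / of_nat p ^ (j + 1))) {m..}"

definition s_ser :: "nat \<Rightarrow> 'f::comm_ring_1 hser" where
  "s_ser p = hsum (\<lambda>m. hmul (hmono 1 (of_nat m)) (s_m p m)) UNIV"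

definition S_set :: "nat \<Rightarrow> (nat \<times> nat) set" where
  "S_set p = {(n, i). n \<le> i \<and> \<not> p dvd (i choose n)}"

definition delta :: "nat \<Rightarrow> nat \<Rightarrow> nat \<Rightarrow> rat" where
  "delta p n i = of_nat n - 1 / of_nat p ^ (i + 1)"

definition s_trunc :: "nat \<Rightarrow> nat \<Rightarrow> nat \<Rightarrow> 'f::comm_ring_1 hser" where
  "s_trunc p n i =
     hadd (hsum (\<lambda>m. hmul (hmono 1 (of_nat m)) (s_m p m)) {..<n})
          (hmul (hmono 1 (of_nat n))
                (hsum (\<lambda>j. hmono (of_nat (j choose n)) (- 1 / of_nat p ^ (j + 1))) {n..<i}))"

text \<open>l-th coefficient of the expansion of sum_k cs!k x^k in powers of (x - c).\<close>
definition taylor_coeff :: "'f::comm_ring_1 hser list \<Rightarrow> 'f hser \<Rightarrow> nat \<Rightarrow> 'f hser" where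
  "taylor_coeff cs c l =
     hsum (\<lambda>k. hmul (\<lambda>q. of_nat (k choose l) * (cs ! k) q) (hpow c (k - l))) {l..<length cs}"

text \<open>Depth-zero valuation with centre c and radius d.\<close>
definition vdepth0 :: "'f::comm_ring_1 hser \<Rightarrow> rat \<Rightarrow> 'f hser list \<Rightarrow> ereal" where
  "vdepth0 c d cs =
     (INF l\<in>{..<length cs}. hval (taylor_coeff cs c l) + ereal (real_of_rat (of_nat l * d)))"

definition v_ni :: "nat \<Rightarrow> nat \<Rightarrow> nat \<Rightarrow> 'f::comm_ring_1 hser list \<Rightarrow> ereal" where
  "v_ni p n i = vdepth0 (s_trunc p n i) (delta p n i)"

definition v_s :: "nat \<Rightarrow> 'f::comm_ring_1 hser list \<Rightarrow> ereal" where
  "v_s p cs = hval (heval cs (s_ser p))"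

definition val_le :: "('f::comm_ring_1 hser list \<Rightarrow> ereal) \<Rightarrow> ('f hser list \<Rightarrow> ereal) \<Rightarrow> bool" where
  "val_le \<mu> \<nu> \<longleftrightarrow> (\<forall>cs\<in>barK_polys. \<mu> cs \<le> \<nu> cs)"

definition val_less :: "('f::comm_ring_1 hser list \<Rightarrow> ereal) \<Rightarrow> ('f hser list \<Rightarrow> ereal) \<Rightarrow> bool" where
  "val_less \<mu> \<nu> \<longleftrightarrow> val_le \<mu> \<nu> \<and> (\<exists>cs\<in>barK_polys. \<mu> cs \<noteq> \<nu> cs)"

end

theory Submission
  imports Defs "HOL-Computational_Algebra.Primes" "HOL-Library.Set_Algebras"
begin

text \<open>
  The series \<open>s\<close> and all its truncations are supported on the exponents
  \<open>\<delta>(a, b) = a - 1/p\<^bsup>b+1\<^esup>\<close>, which form a well-ordered set ordered lexicographically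
  in \<open>(a, b)\<close>; the coefficient at \<open>\<delta>(a, b)\<close> is \<open>binom(b, a)\<close>, and \<open>s\<^sub>n\<^sub>,\<^sub>i\<close> keeps
  exactly the exponents below \<open>\<delta>(n, i)\<close>. So for \<open>(m, j) \<in> S\<close> the difference
  \<open>s\<^sub>n\<^sub>,\<^sub>i - s\<^sub>m\<^sub>,\<^sub>j\<close> has valuation \<open>\<delta>(m, j)\<close> if \<open>\<delta>(m, j) < \<delta>(n, i)\<close> and at least
  \<open>\<delta>(n, i)\<close> otherwise, and the depth-zero valuation of \<open>x - s\<^sub>m\<^sub>,\<^sub>j\<close> is the minimum of
  this valuation and \<open>\<delta>(n, i)\<close>.

  Expanding a polynomial in powers of \<open>x - s\<^sub>n\<^sub>,\<^sub>i\<close> and using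
  \<open>v(s - s\<^sub>n\<^sub>,\<^sub>i) \<ge> \<delta>(n, i)\<close> gives \<open>v\<^sub>n\<^sub>,\<^sub>i \<le> v\<^sub>s\<close>. The inequality is strict at
  \<open>x - s\<^sub>n\<^sub>+\<^sub>1\<^sub>,\<^sub>n\<^sub>+\<^sub>1\<close>, where \<open>v\<^sub>n\<^sub>,\<^sub>i\<close> takes the value \<open>\<delta>(n, i)\<close> and \<open>v\<^sub>s\<close> is at least
  \<open>\<delta>(n + 1, n + 1)\<close>. Its coefficients lie in \<open>K\<close>-bar because
  \<open>s\<^sub>N\<^sub>,\<^sub>N = \<Sum>m<N. t\<^sup>m s\<^sub>m\<close> is algebraic over \<open>K\<close>, by the Artin-Schreier relations
  \<open>s\<^sub>m\<^sup>p = s\<^sub>m + s\<^sub>m\<^sub>-\<^sub>1\<close> (with \<open>s\<^sub>-\<^sub>1 = t\<^sup>-\<^sup>1\<close>): the additive operators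
  \<open>y \<mapsto> b y\<^sup>p - b\<^sup>p y\<close>, with \<open>b\<close> the current top coefficient, eliminate \<open>s\<^sub>N\<^sub>-\<^sub>1, \<dots>, s\<^sub>0\<close>
  one at a time, so a nonzero additive polynomial over \<open>K\<close> maps \<open>s\<^sub>N\<^sub>,\<^sub>N\<close> into \<open>K\<close>.
\<close>

lemma well_ordered_set_subset: "well_ordered_set A \<Longrightarrow> B \<subseteq> A \<Longrightarrow> well_ordered_set B"
  unfolding well_ordered_set_def by (meson order_trans)

lemma well_ordered_set_least:
  assumes "well_ordered_set A" "B \<subseteq> A" "B \<noteq> {}"
  obtains m where "m \<in> B" "\<And>x. x \<in> B \<Longrightarrow> m \<le> x"
  using assms unfolding well_ordered_set_def by meson

lemma well_ordered_set_Un: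
  assumes A: "well_ordered_set A" and B: "well_ordered_set B"
  shows "well_ordered_set (A \<union> B)"
  unfolding well_ordered_set_def
proof (intro allI impI)
  fix C assume C: "C \<subseteq> A \<union> B" "C \<noteq> {}"
  consider "C \<subseteq> A" | "C \<subseteq> B" | "C \<inter> A \<noteq> {}" "C \<inter> B \<noteq> {}" using C(1) by blast
  then show "\<exists>m\<in>C. \<forall>x\<in>C. m \<le> x"
  proof cases
    case 3
    then obtain a b where a: "a \<in> C \<inter> A" "\<And>x. x \<in> C \<inter> A \<Longrightarrow> a \<le> x"
      and b: "b \<in> C \<inter> B" "\<And>x. x \<in> C \<inter> B \<Longrightarrow> b \<le> x"
      using well_ordered_set_least[OF A, of "C \<inter> A"] well_ordered_set_least[OF B, of "C \<inter> B"]
      by (metis inf_le2)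
    have "min a b \<le> x" if "x \<in> C" for x
      using that C(1) a(2) b(2) by (metis IntI Un_iff min.coboundedI1 min.coboundedI2 subsetD)
    moreover have "min a b \<in> C" using a(1) b(1) by (simp add: min_def)
    ultimately show ?thesis by blast
  qed (use well_ordered_set_least[OF A _ C(2)] well_ordered_set_least[OF B _ C(2)] in metis)+
qed

lemma well_ordered_set_finite: "finite (A::rat set) \<Longrightarrow> well_ordered_set A"
  unfolding well_ordered_set_def by (metis Min_in Min_le finite_subset)

lemma well_ordered_set_no_decseq:
  assumes wo: "well_ordered_set A" and f: "range f \<subseteq> A" "\<And>n. f (Suc n) < f n"
  shows False
proof -
  obtain m where "m \<in> range f" "\<And>x. x \<in> range f \<Longrightarrow> m \<le> x"
    using well_ordered_set_least[OF wo f(1)] by blast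
  then obtain k where "\<And>x. x \<in> range f \<Longrightarrow> f k \<le> x" by blast
  then have "f k \<le> f (Suc k)" by blast
  then show False using f(2)[of k] by simp
qed

lemma well_ordered_setI_no_decseq:
  assumes no_dec: "\<And>f. range f \<subseteq> A \<Longrightarrow> \<forall>n. f (Suc n) < f n \<Longrightarrow> False"
  shows "well_ordered_set A"
  unfolding well_ordered_set_def
proof (intro allI impI)
  fix D assume D: "D \<subseteq> A" "D \<noteq> {}"
  show "\<exists>m\<in>D. \<forall>x\<in>D. m \<le> x"
  proof (rule ccontr)
    assume "\<not> (\<exists>m\<in>D. \<forall>x\<in>D. m \<le> x)"
    then have "\<forall>m\<in>D. \<exists>x\<in>D. x < m" by (meson not_le)
    then obtain smaller where smaller: "\<And>m. m \<in> D \<Longrightarrow> smaller m \<in> D \<and> smaller m < m"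
      using bchoice[of D "\<lambda>m x. x \<in> D \<and> x < m"] by blast
    obtain x0 where x0: "x0 \<in> D" using D by blast
    define f where "f n = (smaller ^^ n) x0" for n
    have fD: "f n \<in> D" for n by (induction n) (auto simp: f_def x0 smaller)
    have "f (Suc n) < f n" for n using smaller[OF fD[of n]] by (simp add: f_def)
    moreover have "range f \<subseteq> A" using fD D(1) by blast
    ultimately show False using no_dec by blast
  qed
qed

lemma well_ordered_set_incseq_subseq:
  fixes f :: "nat \<Rightarrow> rat"
  assumes wo: "well_ordered_set A" and fA: "range f \<subseteq> A"
  obtains g where "strict_mono g" "incseq (\<lambda>n. f (g n))"
proof -
  obtain h :: "nat \<Rightarrow> nat" where h: "strict_mono h" "monoseq (\<lambda>n. f (h n))"
    using seq_monosub by blast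
  show ?thesis
  proof (cases "incseq (\<lambda>n. f (h n))")
    case True
    then show ?thesis using h(1) that by blast
  next
    case False
    then have dec: "decseq (\<lambda>n. f (h n))" using h(2) by (simp add: monoseq_iff)
    have "range (\<lambda>n. f (h n)) \<subseteq> A" using fA by auto
    then obtain m where "m \<in> range (\<lambda>n. f (h n))" "\<And>x. x \<in> range (\<lambda>n. f (h n)) \<Longrightarrow> m \<le> x"
      using well_ordered_set_least[OF wo] by blast
    then obtain k where k: "\<forall>x\<in>range (\<lambda>n. f (h n)). f (h k) \<le> x" by blast
    have const: "f (h (n + k)) = f (h k)" for n
      using decseqD[OF dec, of k "n + k"] k by (meson antisym le_add2 rangeI)
    have "strict_mono (\<lambda>n. h (n + k))"
      unfolding strict_mono_def using strict_monoD[OF h(1)] by simp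
    moreover have "incseq (\<lambda>n. f (h (n + k)))"
      by (rule incseq_SucI) (simp only: const order_refl)
    ultimately show ?thesis using that by blast
  qed
qed

lemma finite_convolution_set:
  fixes A B :: "rat set"
  assumes A: "well_ordered_set A" and B: "well_ordered_set B"
  shows "finite {u \<in> A. q - u \<in> B}"
proof (rule ccontr)
  assume "infinite {u \<in> A. q - u \<in> B}"
  then obtain f :: "nat \<Rightarrow> rat" where f: "inj f" "range f \<subseteq> {u \<in> A. q - u \<in> B}"
    using infinite_countable_subset by blast
  have "range f \<subseteq> A" using f(2) by blast
  then obtain g where g: "strict_mono g" "incseq (\<lambda>n. f (g n))"
    by (rule well_ordered_set_incseq_subseq[OF A])
  have "f (g n) < f (g (Suc n))" for n
  proof -
    have "g n \<noteq> g (Suc n)" using strict_monoD[OF g(1), of n "Suc n"] by simp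
    then have "f (g n) \<noteq> f (g (Suc n))" using f(1) by (simp add: inj_eq)
    then show ?thesis using incseqD[OF g(2), of n "Suc n"] by simp
  qed
  then have "q - f (g (Suc n)) < q - f (g n)" for n by simp
  moreover have "range (\<lambda>n. q - f (g n)) \<subseteq> B" using f(2) by auto
  ultimately show False using well_ordered_set_no_decseq[OF B] by blast
qed

lemma well_ordered_set_plus:
  assumes A: "well_ordered_set A" and B: "well_ordered_set B"
  shows "well_ordered_set (A + B)"
proof (rule well_ordered_setI_no_decseq)
  fix c assume c: "range c \<subseteq> A + B" "\<forall>n. c (Suc n) < c n"
  have "\<forall>n. \<exists>u\<in>A. \<exists>w\<in>B. c n = u + w"
    using c(1) unfolding set_plus_def by blast
  then obtain a b where a: "range a \<subseteq> A" and b: "range b \<subseteq> B" and ab: "\<And>n. c n = a n + b n"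
    by (metis image_subset_iff)
  obtain g where g: "strict_mono g" "incseq (\<lambda>n. a (g n))"
    by (rule well_ordered_set_incseq_subseq[OF A a])
  have "strict_mono (\<lambda>n. - c n)" using c(2) by (intro strict_mono_Suc_iff[THEN iffD2]) simp
  then have c_dec: "c (g (Suc n)) < c (g n)" for n
    using strict_monoD[of "\<lambda>n. - c n" "g n" "g (Suc n)"] strict_monoD[OF g(1), of n "Suc n"] by simp
  have a_inc: "a (g n) \<le> a (g (Suc n))" for n using incseqD[OF g(2)] by simp
  have "b (g (Suc n)) < b (g n)" for n
    using c_dec[of n] a_inc[of n] ab[of "g n"] ab[of "g (Suc n)"] by linarith
  moreover have "range (\<lambda>n. b (g n)) \<subseteq> B" using b by blast
  ultimately show False using well_ordered_set_no_decseq[OF B] by blast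
qed

section \<open>The ring of Hahn series\<close>

lemma hsupp_iff [simp]: "q \<in> hsupp a \<longleftrightarrow> a q \<noteq> 0"
  by (simp add: hsupp_def)

lemma hahn_iff: "a \<in> hahn \<longleftrightarrow> well_ordered_set (hsupp a)"
  by (simp add: hahn_def)

lemma hahn_subset: "b \<in> hahn \<Longrightarrow> (\<And>q. a q \<noteq> 0 \<Longrightarrow> b q \<noteq> 0) \<Longrightarrow> a \<in> hahn"
  unfolding hahn_iff by (erule well_ordered_set_subset) auto

lemma hahn_finite_support: "finite {q. a q \<noteq> 0} \<Longrightarrow> a \<in> hahn"
  unfolding hahn_iff hsupp_def by (rule well_ordered_set_finite)

lemma hzero_hahn: "hzero \<in> hahn"
  by (rule hahn_finite_support) (simp add: hzero_def)

lemma hmono_hahn: "hmono c e \<in> hahn"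
  by (rule hahn_finite_support, rule finite_subset[of _ "{e}"]) (auto simp: hmono_def)

lemma hone_hahn: "hone \<in> hahn"
  by (rule hahn_finite_support, rule finite_subset[of _ "{0}"]) (auto simp: hone_def)

lemma hadd_hahn:
  fixes a b :: "'f::monoid_add hser"
  shows "a \<in> hahn \<Longrightarrow> b \<in> hahn \<Longrightarrow> hadd a b \<in> hahn"
  unfolding hahn_iff
  by (rule well_ordered_set_subset[OF well_ordered_set_Un[of "hsupp a" "hsupp b"]])
     (auto simp: hadd_def)

lemma hneg_hahn:
  fixes a :: "'f::group_add hser"
  shows "a \<in> hahn \<Longrightarrow> hneg a \<in> hahn"
  unfolding hahn_iff hsupp_def hneg_def by simp

lemma finite_hmul_support:
  assumes "a \<in> hahn" "b \<in> hahn"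
  shows "finite {u. a u \<noteq> 0 \<and> b (q - u) \<noteq> 0}"
  using finite_convolution_set[of "hsupp a" "hsupp b" q] assms by (simp add: hahn_def)

lemma hmul_eq_sum:
  assumes "finite F" "{u. a u \<noteq> 0 \<and> b (q - u) \<noteq> 0} \<subseteq> F"
  shows "hmul a b q = (\<Sum>u\<in>F. a u * b (q - u))"
  unfolding hmul_def by (rule sum.mono_neutral_left) (use assms in auto)

lemma hmul_nonzeroE:
  assumes "hmul a b q \<noteq> 0"
  obtains u where "a u \<noteq> 0" "b (q - u) \<noteq> 0"
  using assms unfolding hmul_def by (metis (mono_tags, lifting) empty_Collect_eq sum.empty)

lemma hsupp_hmul: "hsupp (hmul a b) \<subseteq> hsupp a + hsupp b"
proof
  fix q assume "q \<in> hsupp (hmul a b)"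
  then obtain u where "a u \<noteq> 0" "b (q - u) \<noteq> 0" using hmul_nonzeroE by force
  then have "u + (q - u) \<in> hsupp a + hsupp b" by (intro set_plus_intro) auto
  then show "q \<in> hsupp a + hsupp b" by simp
qed

lemma hmul_hahn: "a \<in> hahn \<Longrightarrow> b \<in> hahn \<Longrightarrow> hmul a b \<in> hahn"
  unfolding hahn_iff using well_ordered_set_subset[OF well_ordered_set_plus hsupp_hmul] by blast

lemma hmul_commute: "hmul a b = hmul b a"
proof
  fix q
  show "hmul a b q = hmul b a q"
    unfolding hmul_def
    by (rule sum.reindex_bij_witness[of _ "\<lambda>w. q - w" "\<lambda>u. q - u"]) (auto simp: mult.commute)
qed

lemma hmul_hmono: "hmul (hmono c e) b = (\<lambda>q. c * b (q - e))"
proof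
  fix q
  have "hmul (hmono c e) b q = (\<Sum>u\<in>{e}. hmono c e u * b (q - u))"
    by (rule hmul_eq_sum) (auto simp: hmono_def split: if_splits)
  then show "hmul (hmono c e) b q = c * b (q - e)" by (simp add: hmono_def)
qed

lemma hone_eq_hmono: "hone = hmono 1 0"
  by (simp add: hone_def hmono_def fun_eq_iff)

lemma hmul_hone: "hmul hone b = b"
  by (simp add: hone_eq_hmono hmul_hmono)

lemma hmul_hadd_distrib:
  assumes "a \<in> hahn" "b \<in> hahn" "c \<in> hahn"
  shows "hmul (hadd a b) c = hadd (hmul a c) (hmul b c)"
proof
  fix q
  define F where "F = {u. a u \<noteq> 0 \<and> c (q - u) \<noteq> 0} \<union> {u. b u \<noteq> 0 \<and> c (q - u) \<noteq> 0}"
  have F: "finite F" unfolding F_def using finite_hmul_support assms by blast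
  have "hmul (hadd a b) c q = (\<Sum>u\<in>F. hadd a b u * c (q - u))"
    by (rule hmul_eq_sum[OF F]) (auto simp: F_def hadd_def)
  also have "\<dots> = (\<Sum>u\<in>F. a u * c (q - u)) + (\<Sum>u\<in>F. b u * c (q - u))"
    by (simp add: hadd_def distrib_right sum.distrib)
  also have "\<dots> = hmul a c q + hmul b c q"
    by (simp add: hmul_eq_sum[OF F] F_def)
  finally show "hmul (hadd a b) c q = hadd (hmul a c) (hmul b c) q" by (simp add: hadd_def)
qed

lemma hmul_hmul_right:
  assumes A: "a \<in> hahn" and B: "b \<in> hahn" and C: "c \<in> hahn"
  shows "hmul a (hmul b c) q =
    (\<Sum>(u, w)\<in>{(u, w). a u \<noteq> 0 \<and> b w \<noteq> 0 \<and> c (q - u - w) \<noteq> 0}. a u * b w * c (q - u - w))"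
proof -
  define Y where "Y = {u \<in> hsupp a. q - u \<in> hsupp b + hsupp c}"
  define V where "V u = {w. b w \<noteq> 0 \<and> c (q - u - w) \<noteq> 0}" for u
  have Y: "finite Y" unfolding Y_def
    by (rule finite_convolution_set) (use A B C well_ordered_set_plus in \<open>auto simp: hahn_iff\<close>)
  have V: "finite (V u)" for u unfolding V_def using finite_hmul_support[OF B C] by simp
  have "hmul a (hmul b c) q = (\<Sum>u\<in>Y. a u * hmul b c (q - u))"
    by (rule hmul_eq_sum[OF Y]) (use hsupp_hmul[of b c] in \<open>auto simp: Y_def\<close>)
  also have "\<dots> = (\<Sum>u\<in>Y. \<Sum>w\<in>V u. a u * b w * c (q - u - w))"
    by (simp add: hmul_def V_def sum_distrib_left mult.assoc)
  also have "\<dots> = (\<Sum>(u, w)\<in>Sigma Y V. a u * b w * c (q - u - w))"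
    by (rule sum.Sigma[OF Y]) (use V in auto)
  also have "Sigma Y V = {(u, w). a u \<noteq> 0 \<and> b w \<noteq> 0 \<and> c (q - u - w) \<noteq> 0}"
  proof -
    have "q - u \<in> hsupp b + hsupp c" if "b w \<noteq> 0" "c (q - u - w) \<noteq> 0" for u w
      using set_plus_intro[of w "hsupp b" "q - u - w" "hsupp c"] that by simp
    then show ?thesis by (auto simp: Y_def V_def)
  qed
  finally show ?thesis .
qed

lemma hmul_hmul_left:
  assumes A: "a \<in> hahn" and B: "b \<in> hahn" and C: "c \<in> hahn"
  shows "hmul (hmul a b) c q =
    (\<Sum>(u, w)\<in>{(u, w). a u \<noteq> 0 \<and> b w \<noteq> 0 \<and> c (q - u - w) \<noteq> 0}. a u * b w * c (q - u - w))"
proof -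
  define X where "X = {x \<in> hsupp a + hsupp b. q - x \<in> hsupp c}"
  define U where "U x = {u. a u \<noteq> 0 \<and> b (x - u) \<noteq> 0}" for x
  have X: "finite X" unfolding X_def
    by (rule finite_convolution_set) (use A B C well_ordered_set_plus in \<open>auto simp: hahn_iff\<close>)
  have U: "finite (U x)" for x unfolding U_def using finite_hmul_support[OF A B] .
  have "hmul (hmul a b) c q = (\<Sum>x\<in>X. hmul a b x * c (q - x))"
    by (rule hmul_eq_sum[OF X]) (use hsupp_hmul[of a b] in \<open>auto simp: X_def\<close>)
  also have "\<dots> = (\<Sum>x\<in>X. \<Sum>u\<in>U x. a u * b (x - u) * c (q - x))"
    by (simp add: hmul_def U_def sum_distrib_right)
  also have "\<dots> = (\<Sum>(x, u)\<in>Sigma X U. a u * b (x - u) * c (q - x))"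
    by (rule sum.Sigma[OF X]) (use U in auto)
  also have "\<dots> = (\<Sum>(u, w)\<in>{(u, w). a u \<noteq> 0 \<and> b w \<noteq> 0 \<and> c (q - u - w) \<noteq> 0}. a u * b w * c (q - u - w))"
  proof (rule sum.reindex_bij_witness[of _ "\<lambda>(u, w). (u + w, u)" "\<lambda>(x, u). (u, x - u)"])
    fix uw assume "uw \<in> {(u, w). a u \<noteq> 0 \<and> b w \<noteq> 0 \<and> c (q - u - w) \<noteq> 0}"
    then obtain u w where uw: "uw = (u, w)" "a u \<noteq> 0" "b w \<noteq> 0" "c (q - u - w) \<noteq> 0" by blast
    have "u + w \<in> hsupp a + hsupp b" using uw by (intro set_plus_intro) auto
    then show "(case uw of (u, w) \<Rightarrow> (u + w, u)) \<in> Sigma X U"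
      using uw by (simp add: X_def U_def diff_diff_eq)
  next
    fix xu assume "xu \<in> Sigma X U"
    then show "(case xu of (x, u) \<Rightarrow> (u, x - u)) \<in> {(u, w). a u \<noteq> 0 \<and> b w \<noteq> 0 \<and> c (q - u - w) \<noteq> 0}"
      by (auto simp: X_def U_def)
  qed auto
  finally show ?thesis .
qed

lemma hmul_assoc: "a \<in> hahn \<Longrightarrow> b \<in> hahn \<Longrightarrow> c \<in> hahn \<Longrightarrow> hmul (hmul a b) c = hmul a (hmul b c)"
  by (rule ext) (simp only: hmul_hmul_left hmul_hmul_right)

typedef (overloaded) ('f::comm_ring_1) hahn_series = "hahn :: 'f hser set"
  morphisms hcoeff Abs_hahn_series
  using hzero_hahn by blast

setup_lifting type_definition_hahn_series

instantiation hahn_series :: (comm_ring_1) comm_ring_1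
begin

lift_definition zero_hahn_series :: "'a hahn_series" is hzero by (rule hzero_hahn)
lift_definition one_hahn_series :: "'a hahn_series" is hone by (rule hone_hahn)
lift_definition plus_hahn_series :: "'a hahn_series \<Rightarrow> 'a hahn_series \<Rightarrow> 'a hahn_series"
  is hadd by (rule hadd_hahn)
lift_definition uminus_hahn_series :: "'a hahn_series \<Rightarrow> 'a hahn_series"
  is hneg by (rule hneg_hahn)
lift_definition minus_hahn_series :: "'a hahn_series \<Rightarrow> 'a hahn_series \<Rightarrow> 'a hahn_series"
  is "\<lambda>a b. hadd a (hneg b)" by (intro hadd_hahn hneg_hahn)
lift_definition times_hahn_series :: "'a hahn_series \<Rightarrow> 'a hahn_series \<Rightarrow> 'a hahn_series"
  is hmul by (rule hmul_hahn)

instance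
proof
  fix a b c :: "'a hahn_series"
  show "a * b * c = a * (b * c)" by transfer (rule hmul_assoc)
  show "a * b = b * a" by transfer (rule hmul_commute)
  show "1 * a = a" by transfer (rule hmul_hone)
  show "a + b + c = a + (b + c)" by transfer (simp add: hadd_def add.assoc)
  show "a + b = b + a" by transfer (simp add: hadd_def add.commute)
  show "0 + a = a" by transfer (simp add: hadd_def hzero_def)
  show "- a + a = 0" by transfer (simp add: hadd_def hneg_def hzero_def)
  show "a - b = a + - b" by transfer simp
  show "(a + b) * c = a * c + b * c" by transfer (rule hmul_hadd_distrib)
  show "(0::'a hahn_series) \<noteq> 1"
    by transfer (simp add: hzero_def hone_def fun_eq_iff)
qed

end

lemma hcoeff_Abs: "a \<in> hahn \<Longrightarrow> hcoeff (Abs_hahn_series a) = a"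
  by (rule Abs_hahn_series_inverse)

lemma hcoeff_eq_hzero_iff: "hcoeff x = hzero \<longleftrightarrow> x = 0"
  by (metis hcoeff_inject zero_hahn_series.rep_eq)

lemma hcoeff_sum: "hcoeff (sum f I) = (\<lambda>q. \<Sum>i\<in>I. hcoeff (f i) q)"
  by (induction I rule: infinite_finite_induct)
     (simp_all add: zero_hahn_series.rep_eq plus_hahn_series.rep_eq hzero_def hadd_def)

lemma hcoeff_of_nat: "hcoeff (of_nat n) = hmono (of_nat n) 0"
  by (induction n)
     (simp_all add: zero_hahn_series.rep_eq plus_hahn_series.rep_eq one_hahn_series.rep_eq
       hzero_def hadd_def hone_def hmono_def fun_eq_iff)

lemma hsum_finite: "finite I \<Longrightarrow> hsum F I = (\<lambda>q. \<Sum>i\<in>I. F i q)"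
  unfolding hsum_def by (rule ext, rule sum.mono_neutral_left) auto

lemma hpow_eq_power: "x \<in> hahn \<Longrightarrow> hpow x n = hcoeff (Abs_hahn_series x ^ n)"
  by (induction n) (simp_all add: hpow_def one_hahn_series.rep_eq times_hahn_series.rep_eq hcoeff_Abs)

lemma heval_eq_sum:
  assumes "set cs \<subseteq> hahn" "x \<in> hahn"
  shows "heval cs x = hcoeff (\<Sum>k<length cs. Abs_hahn_series (cs ! k) * Abs_hahn_series x ^ k)"
  using assms(1)
proof (induction cs)
  case Nil
  then show ?case by (simp add: heval_def zero_hahn_series.rep_eq)
next
  case (Cons c cs)
  have "(\<Sum>k<length (c # cs). Abs_hahn_series ((c # cs) ! k) * Abs_hahn_series x ^ k)
      = Abs_hahn_series c + Abs_hahn_series x * (\<Sum>k<length cs. Abs_hahn_series (cs ! k) * Abs_hahn_series x ^ k)"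
    by (simp add: sum.lessThan_Suc_shift sum_distrib_left algebra_simps del: sum.lessThan_Suc)
  then show ?case using Cons assms(2)
    by (simp add: heval_def plus_hahn_series.rep_eq times_hahn_series.rep_eq hcoeff_Abs)
qed

lemma taylor_coeff_eq_sum:
  assumes "set cs \<subseteq> hahn" "c \<in> hahn"
  shows "taylor_coeff cs c l = hcoeff (\<Sum>k\<in>{l..<length cs}.
    of_nat (k choose l) * Abs_hahn_series (cs ! k) * Abs_hahn_series c ^ (k - l))"
proof -
  have "hmul (\<lambda>q. of_nat (k choose l) * (cs ! k) q) (hpow c (k - l))
      = hcoeff (of_nat (k choose l) * Abs_hahn_series (cs ! k) * Abs_hahn_series c ^ (k - l))"
    if "k < length cs" for k
  proof -
    have "cs ! k \<in> hahn" using that assms(1) by auto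
    then show ?thesis using assms(2)
      by (simp add: times_hahn_series.rep_eq hcoeff_of_nat hmul_hmono hpow_eq_power hcoeff_Abs)
  qed
  then show ?thesis
    unfolding taylor_coeff_def hsum_finite[OF finite_atLeastLessThan] hcoeff_sum by simp
qed

lemma taylor_expansion_sum:
  fixes a :: "nat \<Rightarrow> 'a::comm_ring_1"
  shows "(\<Sum>k<N. a k * x ^ k)
    = (\<Sum>l<N. (\<Sum>k\<in>{l..<N}. of_nat (k choose l) * a k * c ^ (k - l)) * (x - c) ^ l)"
proof -
  have "a k * x ^ k = (\<Sum>l<N. a k * (of_nat (k choose l) * (x - c) ^ l * c ^ (k - l)))"
    if "k < N" for k
  proof -
    have "x ^ k = (\<Sum>l\<le>k. of_nat (k choose l) * (x - c) ^ l * c ^ (k - l))"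
      using binomial_ring[of "x - c" c k] by simp
    also have "\<dots> = (\<Sum>l<N. of_nat (k choose l) * (x - c) ^ l * c ^ (k - l))"
      by (rule sum.mono_neutral_left) (use that in \<open>auto simp: binomial_eq_0\<close>)
    finally show ?thesis by (simp add: sum_distrib_left)
  qed
  then have "(\<Sum>k<N. a k * x ^ k) = (\<Sum>k<N. \<Sum>l<N. a k * (of_nat (k choose l) * (x - c) ^ l * c ^ (k - l)))"
    by simp
  also have "\<dots> = (\<Sum>l<N. \<Sum>k<N. a k * (of_nat (k choose l) * (x - c) ^ l * c ^ (k - l)))"
    by (rule sum.swap)
  also have "\<dots> = (\<Sum>l<N. \<Sum>k\<in>{l..<N}. a k * (of_nat (k choose l) * (x - c) ^ l * c ^ (k - l)))"
    by (intro sum.cong refl sum.mono_neutral_right) (auto simp: binomial_eq_0)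
  finally show ?thesis
    by (simp add: sum_distrib_left sum_distrib_right mult_ac)
qed

lemma hahn_least_support:
  assumes "a \<in> hahn" "a \<noteq> hzero"
  obtains m where "a m \<noteq> 0" "\<And>q. a q \<noteq> 0 \<Longrightarrow> m \<le> q"
proof -
  have "hsupp a \<noteq> {}" using assms(2) by (auto simp: hzero_def hsupp_def)
  then show ?thesis
    using well_ordered_set_least[of "hsupp a" "hsupp a"] assms(1) that by (auto simp: hahn_iff)
qed

lemma hval_eqI:
  assumes "a m \<noteq> 0" "\<And>q. a q \<noteq> 0 \<Longrightarrow> m \<le> q"
  shows "hval a = ereal (real_of_rat m)"
proof -
  have "(LEAST q. a q \<noteq> 0) = m" by (rule Least_equality) (use assms in auto)
  moreover have "a \<noteq> hzero" using assms(1) by (auto simp: hzero_def)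
  ultimately show ?thesis by (simp add: hval_def)
qed

lemma hval_ge_iff:
  assumes "a \<in> hahn"
  shows "e \<le> hval a \<longleftrightarrow> (\<forall>q. a q \<noteq> 0 \<longrightarrow> e \<le> ereal (real_of_rat q))"
proof (cases "a = hzero")
  case True
  then show ?thesis by (simp add: hval_def hzero_def)
next
  case False
  then obtain m where m: "a m \<noteq> 0" "\<And>q. a q \<noteq> 0 \<Longrightarrow> m \<le> q"
    using hahn_least_support[OF assms] by blast
  then have "hval a = ereal (real_of_rat m)" by (rule hval_eqI)
  with m show ?thesis by (metis ereal_less_eq(3) of_rat_less_eq order.trans)
qed

lemma hval_geI: "a \<in> hahn \<Longrightarrow> (\<And>q. a q \<noteq> 0 \<Longrightarrow> e \<le> ereal (real_of_rat q)) \<Longrightarrow> e \<le> hval a"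
  using hval_ge_iff by blast

lemma hval_geD: "a \<in> hahn \<Longrightarrow> e \<le> hval a \<Longrightarrow> a q \<noteq> 0 \<Longrightarrow> e \<le> ereal (real_of_rat q)"
  using hval_ge_iff by blast

lemma hval_hone: "hval (hone :: 'f::zero_neq_one hser) = 0"
proof -
  have "hval (hone :: 'f hser) = ereal (real_of_rat 0)"
    by (rule hval_eqI) (auto simp: hone_def split: if_splits)
  then show ?thesis by (simp add: zero_ereal_def)
qed

definition valuation :: "'f::comm_ring_1 hahn_series \<Rightarrow> ereal" where
  "valuation x = hval (hcoeff x)"

lemma valuation_add: "min (valuation x) (valuation y) \<le> valuation (x + y)"
  unfolding valuation_def plus_hahn_series.rep_eq
proof (rule hval_geI)
  show "hadd (hcoeff x) (hcoeff y) \<in> hahn" using hcoeff hadd_hahn by blast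
  fix q assume "hadd (hcoeff x) (hcoeff y) q \<noteq> 0"
  then have "hcoeff x q \<noteq> 0 \<or> hcoeff y q \<noteq> 0" by (auto simp: hadd_def)
  then show "min (hval (hcoeff x)) (hval (hcoeff y)) \<le> ereal (real_of_rat q)"
    by (meson hcoeff hval_geD min.coboundedI1 min.coboundedI2 order_refl)
qed

lemma valuation_mult: "valuation x + valuation y \<le> valuation (x * y)"
  unfolding valuation_def times_hahn_series.rep_eq
proof (rule hval_geI)
  show "hmul (hcoeff x) (hcoeff y) \<in> hahn" using hcoeff hmul_hahn by blast
  fix q assume "hmul (hcoeff x) (hcoeff y) q \<noteq> 0"
  then obtain u where u: "hcoeff x u \<noteq> 0" "hcoeff y (q - u) \<noteq> 0" by (rule hmul_nonzeroE)
  have "hval (hcoeff x) + hval (hcoeff y) \<le> ereal (real_of_rat u) + ereal (real_of_rat (q - u))"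
    by (intro add_mono hval_geD[OF hcoeff order_refl] u)
  also have "\<dots> = ereal (real_of_rat q)" by (simp add: of_rat_diff)
  finally show "hval (hcoeff x) + hval (hcoeff y) \<le> ereal (real_of_rat q)" .
qed

lemma valuation_power:
  assumes "ereal (real_of_rat d) \<le> valuation x"
  shows "ereal (real_of_rat (of_nat l * d)) \<le> valuation (x ^ l)"
proof (induction l)
  case 0
  then show ?case by (simp add: valuation_def one_hahn_series.rep_eq hval_hone)
next
  case (Suc l)
  have "ereal (real_of_rat (of_nat (Suc l) * d))
      = ereal (real_of_rat d) + ereal (real_of_rat (of_nat l * d))"
    by (simp add: algebra_simps of_rat_add of_rat_mult)
  also have "\<dots> \<le> valuation x + valuation (x ^ l)" by (rule add_mono[OF assms Suc])
  also have "\<dots> \<le> valuation (x ^ Suc l)" using valuation_mult by simp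
  finally show ?case .
qed

lemma valuation_sum: "finite I \<Longrightarrow> (INF i\<in>I. valuation (f i)) \<le> valuation (sum f I)"
proof (induction I rule: finite_induct)
  case empty
  then show ?case by (simp add: valuation_def zero_hahn_series.rep_eq hval_def)
next
  case (insert i I)
  have "(INF j\<in>insert i I. valuation (f j)) \<le> min (valuation (f i)) (valuation (sum f I))"
    using insert.IH by (simp add: inf_min min.coboundedI2)
  also have "\<dots> \<le> valuation (f i + sum f I)" by (rule valuation_add)
  finally show ?case using insert by simp
qed

instance hahn_series :: (idom) idom
proof
  fix x y :: "'a hahn_series" assume "x \<noteq> 0" "y \<noteq> 0"
  obtain mx where mx: "hcoeff x mx \<noteq> 0" "\<And>q. hcoeff x q \<noteq> 0 \<Longrightarrow> mx \<le> q"
    using hahn_least_support[OF hcoeff] \<open>x \<noteq> 0\<close> hcoeff_eq_hzero_iff by metis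
  obtain my where my: "hcoeff y my \<noteq> 0" "\<And>q. hcoeff y q \<noteq> 0 \<Longrightarrow> my \<le> q"
    using hahn_least_support[OF hcoeff] \<open>y \<noteq> 0\<close> hcoeff_eq_hzero_iff by metis
  have "hmul (hcoeff x) (hcoeff y) (mx + my) = (\<Sum>u\<in>{mx}. hcoeff x u * hcoeff y (mx + my - u))"
  proof (rule hmul_eq_sum)
    show "{u. hcoeff x u \<noteq> 0 \<and> hcoeff y (mx + my - u) \<noteq> 0} \<subseteq> {mx}"
      using mx(2) my(2) by (force intro: antisym)
  qed simp
  then have "hcoeff (x * y) (mx + my) \<noteq> 0" using mx(1) my(1) by (simp add: times_hahn_series.rep_eq)
  then show "x * y \<noteq> 0" by (auto simp: zero_hahn_series.rep_eq hzero_def)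
qed

section \<open>Frobenius on Hahn series\<close>

lemma of_nat_hahn_series_eq_0_iff: "(of_nat n :: 'f::comm_ring_1 hahn_series) = 0 \<longleftrightarrow> (of_nat n :: 'f) = 0"
  by (simp flip: hcoeff_eq_hzero_iff add: hcoeff_of_nat hmono_def hzero_def fun_eq_iff)

lemma CHAR_hahn_series: "CHAR('f::comm_ring_1 hahn_series) = CHAR('f)"
  by (rule CHAR_eqI) (simp_all add: of_nat_hahn_series_eq_0_iff of_nat_eq_0_iff_char_dvd)

lemma hcoeff_Abs_hmono [simp]: "hcoeff (Abs_hahn_series (hmono c e)) = hmono c e"
  by (rule hcoeff_Abs[OF hmono_hahn])

lemma hcoeff_power_hmono: "hcoeff (Abs_hahn_series (hmono c e) ^ k) = hmono (c ^ k) (of_nat k * e)"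
proof (induction k)
  case 0
  then show ?case by (simp add: one_hahn_series.rep_eq hone_eq_hmono)
next
  case (Suc k)
  then show ?case
    by (simp add: times_hahn_series.rep_eq hmul_hmono)
       (auto simp: hmono_def fun_eq_iff algebra_simps)
qed

lemma hcoeff_power_less:
  assumes "\<And>u. hcoeff y u \<noteq> 0 \<Longrightarrow> u < r"
  shows "hcoeff (y ^ Suc k) u \<noteq> 0 \<Longrightarrow> u < of_nat (Suc k) * r"
proof (induction k arbitrary: u)
  case 0
  then show ?case using assms by simp
next
  case (Suc k)
  then have "hmul (hcoeff y) (hcoeff (y ^ Suc k)) u \<noteq> 0" by (simp add: times_hahn_series.rep_eq)
  then obtain v where "hcoeff y v \<noteq> 0" "hcoeff (y ^ Suc k) (u - v) \<noteq> 0" by (rule hmul_nonzeroE)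
  then have "v < r" "u - v < of_nat (Suc k) * r" using assms Suc.IH by blast+
  then show ?case by (simp add: algebra_simps)
qed

lemma hcoeff_power_greater:
  assumes "\<And>u. hcoeff y u \<noteq> 0 \<Longrightarrow> r < u"
  shows "hcoeff (y ^ Suc k) u \<noteq> 0 \<Longrightarrow> of_nat (Suc k) * r < u"
proof (induction k arbitrary: u)
  case 0
  then show ?case using assms by simp
next
  case (Suc k)
  then have "hmul (hcoeff y) (hcoeff (y ^ Suc k)) u \<noteq> 0" by (simp add: times_hahn_series.rep_eq)
  then obtain v where "hcoeff y v \<noteq> 0" "hcoeff (y ^ Suc k) (u - v) \<noteq> 0" by (rule hmul_nonzeroE)
  then have "r < v" "of_nat (Suc k) * r < u - v" using assms Suc.IH by blast+
  then show ?case by (simp add: algebra_simps)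
qed

lemma hahn_series_split_at:
  fixes x :: "'f::comm_ring_1 hahn_series" and r :: rat
  obtains lo hi where "x = lo + Abs_hahn_series (hmono (hcoeff x r) r) + hi"
    "\<And>u. hcoeff lo u \<noteq> 0 \<Longrightarrow> u < r" "\<And>u. hcoeff hi u \<noteq> 0 \<Longrightarrow> r < u"
proof -
  define lo where "lo = (\<lambda>u. if u < r then hcoeff x u else 0)"
  define hi where "hi = (\<lambda>u. if r < u then hcoeff x u else 0)"
  have "lo \<in> hahn" "hi \<in> hahn"
    by (rule hahn_subset[OF hcoeff], simp add: lo_def hi_def split: if_splits)+
  then have "x = Abs_hahn_series lo + Abs_hahn_series (hmono (hcoeff x r) r) + Abs_hahn_series hi"
    by (intro hcoeff_inject[THEN iffD1] ext)
       (auto simp: plus_hahn_series.rep_eq hcoeff_Abs hadd_def lo_def hi_def, auto simp: hmono_def)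
  moreover have "u < r" if "hcoeff (Abs_hahn_series lo) u \<noteq> 0" for u
    using that \<open>lo \<in> hahn\<close> by (simp add: hcoeff_Abs lo_def split: if_splits)
  moreover have "r < u" if "hcoeff (Abs_hahn_series hi) u \<noteq> 0" for u
    using that \<open>hi \<in> hahn\<close> by (simp add: hcoeff_Abs hi_def split: if_splits)
  ultimately show ?thesis by (rule that)
qed

text \<open>Only the middle term of the splitting at \<open>q / p\<close> contributes to the coefficient at \<open>q\<close>.\<close>

lemma hcoeff_power_CHAR:
  fixes x :: "'f::comm_ring_1 hahn_series"
  assumes "prime p" and "CHAR('f) = p"
  shows "hcoeff (x ^ p) q = hcoeff x (q / of_nat p) ^ p"
proof -
  define r where "r = q / of_nat p"
  define c where "c = hcoeff x r"
  obtain k where k: "p = Suc k" using assms(1) by (metis prime_gt_0_nat Suc_pred)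
  have q: "q = of_nat p * r" using k by (simp add: r_def)
  obtain lo hi where x: "x = lo + Abs_hahn_series (hmono c r) + hi"
    and lo: "\<And>u. hcoeff lo u \<noteq> 0 \<Longrightarrow> u < r" and hi: "\<And>u. hcoeff hi u \<noteq> 0 \<Longrightarrow> r < u"
    unfolding c_def using hahn_series_split_at[of x r] by blast
  have "x ^ p = (lo + Abs_hahn_series (hmono c r) + hi) ^ p" using x by simp
  also have "\<dots> = lo ^ p + Abs_hahn_series (hmono c r) ^ p + hi ^ p"
    using assms by (simp add: freshmans_dream CHAR_hahn_series)
  finally have xp: "x ^ p = lo ^ p + Abs_hahn_series (hmono c r) ^ p + hi ^ p" .
  have "hcoeff (lo ^ p) q = 0"
  proof (rule ccontr)
    assume "hcoeff (lo ^ p) q \<noteq> 0"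
    then have "hcoeff (lo ^ Suc k) q \<noteq> 0" using k by metis
    then have "q < of_nat (Suc k) * r" using hcoeff_power_less[OF lo] by blast
    then show False using q k by simp
  qed
  moreover have "hcoeff (hi ^ p) q = 0"
  proof (rule ccontr)
    assume "hcoeff (hi ^ p) q \<noteq> 0"
    then have "hcoeff (hi ^ Suc k) q \<noteq> 0" using k by metis
    then have "of_nat (Suc k) * r < q" using hcoeff_power_greater[OF hi] by blast
    then show False using q k by simp
  qed
  moreover have "hcoeff (Abs_hahn_series (hmono c r) ^ p) q = c ^ p"
    unfolding hcoeff_power_hmono by (simp add: hmono_def q)
  ultimately show ?thesis unfolding xp by (simp add: plus_hahn_series.rep_eq hadd_def c_def r_def)
qed

lemma of_nat_power_CHAR:
  assumes "prime p" "CHAR('f::comm_ring_1) = p"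
  shows "(of_nat n :: 'f) ^ p = of_nat n"
proof (induction n)
  case 0
  then show ?case using prime_gt_0_nat[OF assms(1)] by (simp add: power_0_left)
next
  case (Suc n)
  have "(of_nat (Suc n) :: 'f) ^ p = 1 ^ p + (of_nat n) ^ p"
    using assms by (simp add: freshmans_dream)
  then show ?case using Suc by simp
qed

lemma delta_eq_shift: "delta p m j = of_nat m + delta p 0 j"
  by (simp add: delta_def)

lemma delta_0_eq: "- 1 / of_nat p ^ (j + 1) = delta p 0 j"
  by (simp add: delta_def)

lemma delta_weight_bounds:
  assumes "p \<ge> 2"
  shows "0 < 1 / (of_nat p ^ (k + 1) :: rat)" "1 / (of_nat p ^ (k + 1) :: rat) < 1"
proof -
  have pos: "0 < (of_nat p ^ (k + 1) :: rat)" using assms by simp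
  have "1 < (of_nat p ^ (k + 1) :: rat)" using assms by (intro one_less_power) auto
  then show "0 < 1 / (of_nat p ^ (k + 1) :: rat)" "1 / (of_nat p ^ (k + 1) :: rat) < 1"
    using pos by (simp_all only: divide_pos_pos zero_less_one divide_less_eq_1_pos)
qed

lemma delta_less_iff:
  assumes p: "p \<ge> 2"
  shows "delta p m j < delta p n i \<longleftrightarrow> m < n \<or> (m = n \<and> j < i)"
proof -
  note w = delta_weight_bounds[OF p]
  have "1 < (of_nat p :: rat)" using p by simp
  then have w_less: "1 / (of_nat p ^ (i + 1) :: rat) < 1 / of_nat p ^ (j + 1) \<longleftrightarrow> j < i"
    by (simp only: inverse_eq_divide[symmetric] inverse_less_iff_less zero_less_power
        power_strict_increasing_iff less_trans[OF zero_less_one]) simp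
  consider "m < n" | "m = n" | "n < m" by linarith
  then show ?thesis
  proof cases
    case 1
    then have "(of_nat m :: rat) + 1 \<le> of_nat n" by linarith
    then show ?thesis using 1 w[of i] w[of j] unfolding delta_def by linarith
  next
    case 2
    then show ?thesis using w_less unfolding delta_def by simp
  next
    case 3
    then have "(of_nat n :: rat) + 1 \<le> of_nat m" by linarith
    then show ?thesis using 3 w[of i] w[of j] unfolding delta_def by linarith
  qed
qed

lemma delta_eq_iff: "p \<ge> 2 \<Longrightarrow> delta p m j = delta p n i \<longleftrightarrow> m = n \<and> j = i"
  using delta_less_iff[of p m j n i] delta_less_iff[of p n i m j] by (metis less_irrefl nat_neq_iff)

lemma well_ordered_set_delta:
  assumes p: "p \<ge> 2"
  shows "well_ordered_set {q. \<exists>a b. q = delta p a b}"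
  unfolding well_ordered_set_def
proof (intro allI impI)
  fix B assume B: "B \<subseteq> {q. \<exists>a b. q = delta p a b}" "B \<noteq> {}"
  define m0 where "m0 = (LEAST m. \<exists>j. delta p m j \<in> B)"
  have "\<exists>m j. delta p m j \<in> B" using B by blast
  then have "\<exists>j. delta p m0 j \<in> B" unfolding m0_def by (rule LeastI_ex)
  then have j0: "delta p m0 (LEAST j. delta p m0 j \<in> B) \<in> B" by (rule LeastI_ex)
  show "\<exists>m\<in>B. \<forall>x\<in>B. m \<le> x"
  proof (intro bexI[OF _ j0] ballI)
    fix x assume "x \<in> B"
    then obtain a b where ab: "x = delta p a b" "delta p a b \<in> B" using B by blast
    have "m0 \<le> a" unfolding m0_def using ab(2) by (rule Least_le[of _ a, OF exI])
    moreover have "(LEAST j. delta p m0 j \<in> B) \<le> b" if "a = m0" using ab(2) that by (simp add: Least_le)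
    ultimately show "delta p m0 (LEAST j. delta p m0 j \<in> B) \<le> x"
      unfolding ab(1) using delta_less_iff[OF p, of a b m0] by (metis le_neq_implies_less not_le)
  qed
qed

lemma hahn_if_support_delta:
  "p \<ge> 2 \<Longrightarrow> (\<And>q. f q \<noteq> 0 \<Longrightarrow> \<exists>a b. q = delta p a b) \<Longrightarrow> f \<in> hahn"
  unfolding hahn_iff by (rule well_ordered_set_subset[OF well_ordered_set_delta]) auto

lemma hsum_eq_single:
  assumes "\<And>i. i \<in> I \<Longrightarrow> i \<noteq> i0 \<Longrightarrow> F i q = 0"
  shows "hsum F I q = (if i0 \<in> I then F i0 q else 0)"
proof -
  have "{i \<in> I. F i q \<noteq> 0} = (if i0 \<in> I \<and> F i0 q \<noteq> 0 then {i0} else {})"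
    using assms by auto
  then show ?thesis unfolding hsum_def by (auto split: if_splits)
qed

lemma hsum_eq_0: "(\<And>i. i \<in> I \<Longrightarrow> F i q = 0) \<Longrightarrow> hsum F I q = 0"
  unfolding hsum_def by (metis (mono_tags, lifting) mem_Collect_eq sum.neutral)

lemma hsum_hmono_delta_at_delta:
  "p \<ge> 2 \<Longrightarrow> hsum (\<lambda>j. hmono (c j) (delta p 0 j)) J (delta p 0 b) = (if b \<in> J then c b else 0)"
  by (subst hsum_eq_single[of _ b]) (auto simp: hmono_def delta_eq_iff)

lemma hsum_hmono_delta_eq_0:
  "(\<And>j. q \<noteq> delta p 0 j) \<Longrightarrow> hsum (\<lambda>j. hmono (c j) (delta p 0 j)) J q = 0"
  by (rule hsum_eq_0) (simp add: hmono_def)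

lemma s_m_eq: "s_m p m = hsum (\<lambda>j. hmono (of_nat (j choose m)) (delta p 0 j)) {m..}"
  unfolding s_m_def delta_0_eq ..

lemma s_m_at_delta: "p \<ge> 2 \<Longrightarrow> s_m p m (delta p 0 b) = of_nat (b choose m)"
  unfolding s_m_eq by (simp add: hsum_hmono_delta_at_delta binomial_eq_0)

lemma s_m_eq_0: "(\<And>j. q \<noteq> delta p 0 j) \<Longrightarrow> s_m p m q = 0"
  unfolding s_m_eq by (rule hsum_hmono_delta_eq_0)

lemma delta_minus_of_nat_eq_delta_0_iff:
  "p \<ge> 2 \<Longrightarrow> delta p a b - of_nat m = delta p 0 j \<longleftrightarrow> a = m \<and> b = j"
  using delta_eq_iff[of p a b m j] by (auto simp: delta_eq_shift[of p m j])

lemma hsum_shifted_s_m_at_delta: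
  assumes p: "p \<ge> 2"
  shows "hsum (\<lambda>m. hmul (hmono 1 (of_nat m)) (s_m p m)) M (delta p a b)
    = (if a \<in> M then of_nat (b choose a) else 0)"
proof -
  have "hsum (\<lambda>m. hmul (hmono 1 (of_nat m)) (s_m p m)) M (delta p a b)
      = (if a \<in> M then hmul (hmono 1 (of_nat a)) (s_m p a) (delta p a b) else 0)"
  proof (rule hsum_eq_single)
    fix m assume "m \<noteq> a"
    then have "delta p a b - of_nat m \<noteq> delta p 0 j" for j
      by (simp add: delta_minus_of_nat_eq_delta_0_iff[OF p])
    then show "hmul (hmono 1 (of_nat m)) (s_m p m) (delta p a b) = 0"
      by (simp add: hmul_hmono s_m_eq_0)
  qed
  also have "hmul (hmono 1 (of_nat a)) (s_m p a) (delta p a b) = of_nat (b choose a)"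
    using s_m_at_delta[OF p, of a b] by (simp add: hmul_hmono delta_eq_shift[of p a b])
  finally show ?thesis .
qed

lemma hsum_shifted_s_m_eq_0:
  assumes "\<And>a b. q \<noteq> delta p a b"
  shows "hsum (\<lambda>m. hmul (hmono 1 (of_nat m)) (s_m p m)) M q = 0"
proof (rule hsum_eq_0)
  fix m
  have "q - of_nat m \<noteq> delta p 0 j" for j using assms[of m j] by (auto simp: delta_eq_shift[of p m j])
  then show "hmul (hmono 1 (of_nat m)) (s_m p m) q = 0" by (simp add: hmul_hmono s_m_eq_0)
qed

lemma s_ser_at_delta: "p \<ge> 2 \<Longrightarrow> s_ser p (delta p a b) = of_nat (b choose a)"
  unfolding s_ser_def by (simp add: hsum_shifted_s_m_at_delta)

lemma s_ser_eq_0: "(\<And>a b. q \<noteq> delta p a b) \<Longrightarrow> s_ser p q = 0"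
  unfolding s_ser_def by (rule hsum_shifted_s_m_eq_0)

lemma s_trunc_eq:
  "s_trunc p n i = hadd (hsum (\<lambda>m. hmul (hmono 1 (of_nat m)) (s_m p m)) {..<n})
    (\<lambda>q. hsum (\<lambda>j. hmono (of_nat (j choose n)) (delta p 0 j)) {n..<i} (q - of_nat n))"
  unfolding s_trunc_def delta_0_eq hmul_hmono by simp

lemma s_trunc_at_delta:
  assumes p: "p \<ge> 2"
  shows "s_trunc p n i (delta p a b) = (if delta p a b < delta p n i then of_nat (b choose a) else 0)"
proof (cases "a = n")
  case True
  have "delta p a b - of_nat n = delta p 0 b" by (simp add: True delta_eq_shift[of p n b])
  then show ?thesis
    by (simp add: s_trunc_eq hadd_def hsum_shifted_s_m_at_delta[OF p] hsum_hmono_delta_at_delta[OF p]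
        delta_less_iff[OF p] True binomial_eq_0)
next
  case False
  then have "delta p a b - of_nat n \<noteq> delta p 0 j" for j
    by (simp add: delta_minus_of_nat_eq_delta_0_iff[OF p])
  then show ?thesis using False
    by (simp add: s_trunc_eq hadd_def hsum_shifted_s_m_at_delta[OF p] hsum_hmono_delta_eq_0
        delta_less_iff[OF p])
qed

lemma s_trunc_eq_0:
  assumes "\<And>a b. q \<noteq> delta p a b"
  shows "s_trunc p n i q = 0"
proof -
  have "q - of_nat n \<noteq> delta p 0 j" for j using assms[of n j] by (auto simp: delta_eq_shift[of p n j])
  then show ?thesis
    by (simp add: s_trunc_eq hadd_def hsum_shifted_s_m_eq_0[OF assms] hsum_hmono_delta_eq_0)
qed

lemma s_m_hahn: "p \<ge> 2 \<Longrightarrow> s_m p m \<in> hahn"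
  by (rule hahn_if_support_delta) (use s_m_eq_0 in blast)+

lemma s_ser_hahn: "p \<ge> 2 \<Longrightarrow> s_ser p \<in> hahn"
  by (rule hahn_if_support_delta) (use s_ser_eq_0 in blast)+

lemma s_trunc_hahn: "p \<ge> 2 \<Longrightarrow> s_trunc p n i \<in> hahn"
  by (rule hahn_if_support_delta) (use s_trunc_eq_0 in blast)+

section \<open>The valuations \<open>v\<^sub>n\<^sub>,\<^sub>i\<close> and \<open>v\<^sub>s\<close>\<close>

lemma vdepth0_linear:
  fixes x c :: "'f::comm_ring_1 hser"
  assumes "x \<in> hahn" "c \<in> hahn"
  shows "vdepth0 c d [hneg x, hone] = min (hval (hadd c (hneg x))) (ereal (real_of_rat d))"
proof -
  have cs: "set [hneg x, hone] \<subseteq> hahn" using assms by (simp add: hneg_hahn hone_hahn)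
  have "taylor_coeff [hneg x, hone] c 0 = hadd c (hneg x)"
    unfolding taylor_coeff_eq_sum[OF cs assms(2)]
    by (simp add: numeral_2_eq_2 plus_hahn_series.rep_eq times_hahn_series.rep_eq
        one_hahn_series.rep_eq hcoeff_Abs hneg_hahn hone_hahn assms hmul_hone
        hmul_commute[of hone] hadd_def fun_eq_iff add.commute)
  moreover have "taylor_coeff [hneg x, hone] c 1 = hone"
    unfolding taylor_coeff_eq_sum[OF cs assms(2)]
    by (simp add: numeral_2_eq_2 times_hahn_series.rep_eq one_hahn_series.rep_eq hcoeff_Abs hone_hahn)
  moreover have "{..<length [hneg x, hone]} = {0, 1}" by auto
  ultimately show ?thesis
    unfolding vdepth0_def by (simp add: hval_hone inf_min zero_ereal_def)
qed

text \<open>Expanding in powers of \<open>x - c\<close>: each term \<open>a\<^sub>l (x - c)\<^sup>l\<close> has value at least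
  \<open>v(a\<^sub>l) + l d\<close>.\<close>

lemma vdepth0_le_hval_heval:
  fixes cs :: "'f::comm_ring_1 hser list"
  assumes cs: "set cs \<subseteq> hahn" and x: "x \<in> hahn" and c: "c \<in> hahn"
    and d: "ereal (real_of_rat d) \<le> hval (hadd x (hneg c))"
  shows "vdepth0 c d cs \<le> hval (heval cs x)"
proof -
  define N where "N = length cs"
  define a where "a k = Abs_hahn_series (cs ! k)" for k
  define X where "X = Abs_hahn_series x"
  define C where "C = Abs_hahn_series c"
  define T where "T l = (\<Sum>k\<in>{l..<N}. of_nat (k choose l) * a k * C ^ (k - l))" for l
  have "hval (heval cs x) = valuation (\<Sum>k<N. a k * X ^ k)"
    unfolding valuation_def heval_eq_sum[OF cs x] N_def a_def X_def ..
  also have "(\<Sum>k<N. a k * X ^ k) = (\<Sum>l<N. T l * (X - C) ^ l)"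
    unfolding T_def by (rule taylor_expansion_sum)
  finally have v: "hval (heval cs x) = valuation (\<Sum>l<N. T l * (X - C) ^ l)" .
  have "vdepth0 c d cs = (INF l\<in>{..<N}. valuation (T l) + ereal (real_of_rat (of_nat l * d)))"
    unfolding vdepth0_def taylor_coeff_eq_sum[OF cs c] valuation_def T_def N_def a_def C_def ..
  also have "\<dots> \<le> (INF l\<in>{..<N}. valuation (T l * (X - C) ^ l))"
  proof (rule INF_mono)
    fix l assume "l \<in> {..<N}"
    have "ereal (real_of_rat d) \<le> valuation (X - C)"
      using d x c by (simp add: valuation_def minus_hahn_series.rep_eq X_def C_def hcoeff_Abs)
    then have "valuation (T l) + ereal (real_of_rat (of_nat l * d)) \<le> valuation (T l) + valuation ((X - C) ^ l)"
      by (intro add_mono order_refl valuation_power)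
    also have "\<dots> \<le> valuation (T l * (X - C) ^ l)" by (rule valuation_mult)
    finally show "\<exists>m\<in>{..<N}. valuation (T m) + ereal (real_of_rat (of_nat m * d)) \<le> valuation (T l * (X - C) ^ l)"
      using \<open>l \<in> {..<N}\<close> by blast
  qed
  also have "\<dots> \<le> valuation (\<Sum>l<N. T l * (X - C) ^ l)" by (rule valuation_sum) simp
  finally show ?thesis unfolding v .
qed

lemma s_trunc_diff_nonzero:
  assumes p: "p \<ge> 2" and nz: "hadd (s_trunc p n i) (hneg (s_trunc p m j)) q \<noteq> (0::'f::comm_ring_1)"
  obtains a b where "q = delta p a b" "(delta p a b < delta p n i) \<noteq> (delta p a b < delta p m j)"
proof -
  have "s_trunc p n i q \<noteq> (0::'f) \<or> s_trunc p m j q \<noteq> (0::'f)" using nz by (auto simp: hadd_def hneg_def)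
  then obtain a b where q: "q = delta p a b" by (meson s_trunc_eq_0)
  moreover have "(delta p a b < delta p n i) \<noteq> (delta p a b < delta p m j)"
    using nz by (auto simp: q hadd_def hneg_def s_trunc_at_delta[OF p] split: if_splits)
  ultimately show ?thesis using that by blast
qed

lemma hval_s_trunc_diff_less:
  assumes p: "p \<ge> 2" and less: "delta p m j < delta p n i" and nz: "(of_nat (j choose m) :: 'f) \<noteq> 0"
  shows "hval (hadd (s_trunc p n i) (hneg (s_trunc p m j)) :: 'f::comm_ring_1 hser)
    = ereal (real_of_rat (delta p m j))"
proof (rule hval_eqI)
  show "hadd (s_trunc p n i) (hneg (s_trunc p m j)) (delta p m j) \<noteq> (0::'f)"
    using less nz by (simp add: hadd_def hneg_def s_trunc_at_delta[OF p])
  fix q assume "hadd (s_trunc p n i) (hneg (s_trunc p m j)) q \<noteq> (0::'f)"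
  then show "delta p m j \<le> q"
    using less by (elim s_trunc_diff_nonzero[OF p]) auto
qed

lemma hval_s_trunc_diff_ge:
  assumes p: "p \<ge> 2" and le: "delta p n i \<le> delta p m j"
  shows "ereal (real_of_rat (delta p n i))
    \<le> hval (hadd (s_trunc p n i) (hneg (s_trunc p m j)) :: 'f::comm_ring_1 hser)"
proof (rule hval_geI)
  show "hadd (s_trunc p n i) (hneg (s_trunc p m j)) \<in> (hahn :: 'f hser set)"
    by (simp add: hadd_hahn hneg_hahn s_trunc_hahn[OF p])
  fix q assume "hadd (s_trunc p n i) (hneg (s_trunc p m j)) q \<noteq> (0::'f)"
  then have "delta p n i \<le> q" using le by (elim s_trunc_diff_nonzero[OF p]) auto
  then show "ereal (real_of_rat (delta p n i)) \<le> ereal (real_of_rat q)" by (simp add: of_rat_less_eq)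
qed

theorem v_ni_linear:
  assumes p: "p \<ge> 2" and "CHAR('f::comm_ring_1) = p" and "(m, j) \<in> S_set p"
  shows "v_ni p n i [hneg (s_trunc p m j :: 'f hser), hone]
    = ereal (real_of_rat (min (delta p n i) (delta p m j)))"
proof -
  have v: "v_ni p n i [hneg (s_trunc p m j :: 'f hser), hone]
      = min (hval (hadd (s_trunc p n i) (hneg (s_trunc p m j)) :: 'f hser)) (ereal (real_of_rat (delta p n i)))"
    unfolding v_ni_def by (rule vdepth0_linear) (simp_all add: s_trunc_hahn[OF p])
  show ?thesis
  proof (cases "delta p m j < delta p n i")
    case True
    have "(of_nat (j choose m) :: 'f) \<noteq> 0"
      using assms(2,3) by (simp add: S_set_def of_nat_eq_0_iff_char_dvd)
    then have "hval (hadd (s_trunc p n i) (hneg (s_trunc p m j)) :: 'f hser) = ereal (real_of_rat (delta p m j))"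
      by (rule hval_s_trunc_diff_less[OF p True])
    then show ?thesis unfolding v using True
      by (simp add: min_absorb1 min_absorb2 of_rat_less_eq)
  next
    case False
    then have le: "delta p n i \<le> delta p m j" by simp
    then have "min (delta p n i) (delta p m j) = delta p n i" by simp
    then show ?thesis unfolding v by (simp only: min_absorb2[OF hval_s_trunc_diff_ge[OF p le]])
  qed
qed

lemma hval_s_ser_minus_s_trunc:
  assumes p: "p \<ge> 2"
  shows "ereal (real_of_rat (delta p n i))
    \<le> hval (hadd (s_ser p) (hneg (s_trunc p n i)) :: 'f::comm_ring_1 hser)"
proof (rule hval_geI)
  show "hadd (s_ser p) (hneg (s_trunc p n i)) \<in> (hahn :: 'f hser set)"
    by (simp add: hadd_hahn hneg_hahn s_trunc_hahn[OF p] s_ser_hahn[OF p])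
  fix q assume nz: "hadd (s_ser p) (hneg (s_trunc p n i)) q \<noteq> (0::'f)"
  have "s_ser p q \<noteq> (0::'f) \<or> s_trunc p n i q \<noteq> (0::'f)" using nz by (auto simp: hadd_def hneg_def)
  then obtain a b where "q = delta p a b" by (meson s_ser_eq_0 s_trunc_eq_0)
  then have "delta p n i \<le> q"
    using nz by (auto simp: hadd_def hneg_def s_trunc_at_delta[OF p] s_ser_at_delta[OF p] split: if_splits)
  then show "ereal (real_of_rat (delta p n i)) \<le> ereal (real_of_rat q)" by (simp add: of_rat_less_eq)
qed

theorem v_ni_le_v_s:
  assumes "p \<ge> 2" "set cs \<subseteq> hahn"
  shows "v_ni p n i cs \<le> v_s p cs"
  unfolding v_ni_def v_s_def
  using assms by (intro vdepth0_le_hval_heval hval_s_ser_minus_s_trunc s_ser_hahn s_trunc_hahn)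

definition K_series :: "'f::comm_ring_1 hahn_series set" where
  "K_series = {x. hcoeff x \<in> K_set}"

lemma K_series_iff: "x \<in> K_series \<longleftrightarrow> (\<exists>N\<ge>1. \<forall>q. hcoeff x q \<noteq> 0 \<longrightarrow> of_nat N * q \<in> \<int>)"
proof -
  have "(\<exists>k::int. q = of_int k / of_nat N) \<longleftrightarrow> of_nat N * q \<in> \<int>" if "N \<ge> 1" for N :: nat and q :: rat
  proof
    assume "\<exists>k::int. q = of_int k / of_nat N"
    then show "of_nat N * q \<in> \<int>" using that by auto
  next
    assume "of_nat N * q \<in> \<int>"
    then obtain k where "of_nat N * q = of_int k" by (auto elim: Ints_cases)
    then show "\<exists>k::int. q = of_int k / of_nat N" using that by (auto simp: field_simps)
  qed
  then show ?thesis unfolding K_series_def K_set_def using hcoeff by auto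
qed

lemma K_series_common_denominator:
  assumes "x \<in> K_series" "y \<in> K_series"
  obtains N where "N \<ge> 1" "\<And>q. hcoeff x q \<noteq> 0 \<Longrightarrow> of_nat N * q \<in> \<int>"
    "\<And>q. hcoeff y q \<noteq> 0 \<Longrightarrow> of_nat N * q \<in> \<int>"
proof -
  obtain N1 N2 where N: "N1 \<ge> 1" "N2 \<ge> 1"
    and x: "\<And>q. hcoeff x q \<noteq> 0 \<Longrightarrow> of_nat N1 * q \<in> \<int>"
    and y: "\<And>q. hcoeff y q \<noteq> 0 \<Longrightarrow> of_nat N2 * q \<in> \<int>"
    using assms unfolding K_series_iff by blast
  show ?thesis
  proof (rule that[of "N1 * N2"])
    show "N1 * N2 \<ge> 1" using N by simp
  next
    fix q assume "hcoeff x q \<noteq> 0"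
    then have "of_nat N2 * (of_nat N1 * q) \<in> \<int>" using x by (blast intro: Ints_mult Ints_of_nat)
    then show "of_nat (N1 * N2) * q \<in> \<int>" by (simp add: ac_simps)
  next
    fix q assume "hcoeff y q \<noteq> 0"
    then have "of_nat N1 * (of_nat N2 * q) \<in> \<int>" using y by (blast intro: Ints_mult Ints_of_nat)
    then show "of_nat (N1 * N2) * q \<in> \<int>" by (simp add: ac_simps)
  qed
qed

lemma K_series_add:
  assumes "x \<in> K_series" "y \<in> K_series"
  shows "x + y \<in> K_series"
proof -
  obtain N where N: "N \<ge> 1" "\<And>q. hcoeff x q \<noteq> 0 \<Longrightarrow> of_nat N * q \<in> \<int>"
    "\<And>q. hcoeff y q \<noteq> 0 \<Longrightarrow> of_nat N * q \<in> \<int>"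
    using K_series_common_denominator[OF assms] by blast
  have "of_nat N * q \<in> \<int>" if "hcoeff (x + y) q \<noteq> 0" for q
    using that N(2,3) by (force simp: plus_hahn_series.rep_eq hadd_def)
  then show ?thesis using N(1) unfolding K_series_iff by blast
qed

lemma K_series_mult:
  assumes "x \<in> K_series" "y \<in> K_series"
  shows "x * y \<in> K_series"
proof -
  obtain N where N: "N \<ge> 1" "\<And>q. hcoeff x q \<noteq> 0 \<Longrightarrow> of_nat N * q \<in> \<int>"
    "\<And>q. hcoeff y q \<noteq> 0 \<Longrightarrow> of_nat N * q \<in> \<int>"
    using K_series_common_denominator[OF assms] by blast
  have "of_nat N * q \<in> \<int>" if "hcoeff (x * y) q \<noteq> 0" for q
  proof -
    have "hmul (hcoeff x) (hcoeff y) q \<noteq> 0" using that by (simp add: times_hahn_series.rep_eq)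
    then obtain u where "hcoeff x u \<noteq> 0" "hcoeff y (q - u) \<noteq> 0" by (rule hmul_nonzeroE)
    then have "of_nat N * u + of_nat N * (q - u) \<in> \<int>" using N by (intro Ints_add)
    then show ?thesis by (simp add: algebra_simps)
  qed
  then show ?thesis using N(1) unfolding K_series_iff by blast
qed

lemma K_series_monomial: "Abs_hahn_series (hmono c (of_int k)) \<in> K_series"
  unfolding K_series_iff hcoeff_Abs_hmono by (intro exI[of _ 1]) (simp add: hmono_def)

lemma K_series_uminus: "x \<in> K_series \<Longrightarrow> - x \<in> K_series"
  by (simp add: K_series_iff uminus_hahn_series.rep_eq hneg_def)

lemma K_series_zero: "0 \<in> K_series"
  unfolding K_series_iff zero_hahn_series.rep_eq hzero_def by (rule exI[of _ "1::nat"]) simp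

lemma K_series_one: "1 \<in> K_series"
  unfolding K_series_iff one_hahn_series.rep_eq hone_def by (rule exI[of _ "1::nat"]) simp

lemma K_series_diff: "x \<in> K_series \<Longrightarrow> y \<in> K_series \<Longrightarrow> x - y \<in> K_series"
  using K_series_add K_series_uminus by (metis diff_conv_add_uminus)

lemma K_series_power: "x \<in> K_series \<Longrightarrow> x ^ n \<in> K_series"
  by (induction n) (simp_all add: K_series_one K_series_mult)

lemma K_series_sum: "(\<And>i. i \<in> I \<Longrightarrow> f i \<in> K_series) \<Longrightarrow> sum f I \<in> K_series"
  by (induction I rule: infinite_finite_induct) (simp_all add: K_series_zero K_series_add)

lemma heval_map_hcoeff: "heval (map hcoeff cs) (hcoeff x) = hcoeff (horner_sum id x cs)"
  by (induction cs)
     (simp_all add: heval_def zero_hahn_series.rep_eq plus_hahn_series.rep_eq times_hahn_series.rep_eq)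

lemma hcoeff_mem_barK_if_poly_root:
  fixes P :: "'f::comm_ring_1 hahn_series poly"
  assumes "P \<noteq> 0" "\<And>k. coeff P k \<in> K_series" "poly P x = 0"
  shows "hcoeff x \<in> barK"
proof -
  have "heval (map hcoeff (coeffs P)) (hcoeff x) = hzero"
    using assms(3) by (simp add: heval_map_hcoeff poly_def zero_hahn_series.rep_eq)
  moreover have "set (map hcoeff (coeffs P)) \<subseteq> K_set"
    using assms(2) by (auto simp: coeffs_def K_series_def)
  moreover have "hcoeff (lead_coeff P) \<in> set (map hcoeff (coeffs P))"
    using coeff_in_coeffs[OF assms(1) order_refl] by simp
  moreover have "hcoeff (lead_coeff P) \<noteq> hzero" using assms(1) by (simp add: hcoeff_eq_hzero_iff)
  ultimately show ?thesis unfolding barK_def using hcoeff by blast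
qed

definition additively_algebraic :: "nat \<Rightarrow> 'f::comm_ring_1 hahn_series \<Rightarrow> bool" where
  "additively_algebraic p x \<longleftrightarrow>
    (\<exists>L a. (\<forall>k\<le>L. a k \<in> K_series) \<and> a L \<noteq> 0 \<and> (\<Sum>k\<le>L. a k * x ^ p ^ k) \<in> K_series)"

lemma hcoeff_mem_barK_if_additively_algebraic:
  assumes p: "p \<ge> 2" and "additively_algebraic p x"
  shows "hcoeff x \<in> barK"
proof -
  obtain L a where a: "\<And>k. k \<le> L \<Longrightarrow> a k \<in> K_series" "a L \<noteq> 0"
    and y: "(\<Sum>k\<le>L. a k * x ^ p ^ k) \<in> K_series"
    using assms(2) unfolding additively_algebraic_def by blast
  define P where "P = (\<Sum>k\<le>L. monom (a k) (p ^ k)) - [:\<Sum>k\<le>L. a k * x ^ p ^ k:]"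
  have coeff_P: "coeff P n = (\<Sum>k\<le>L. if p ^ k = n then a k else 0) - (if n = 0 then (\<Sum>k\<le>L. a k * x ^ p ^ k) else 0)"
    for n by (cases n) (simp_all add: P_def coeff_sum)
  have "coeff P (p ^ L) = a L"
  proof -
    have "(\<Sum>k\<le>L. if p ^ k = p ^ L then a k else 0) = (\<Sum>k\<le>L. if k = L then a k else 0)"
      using p by (intro sum.cong) auto
    then show ?thesis using p by (simp add: coeff_P)
  qed
  then have "P \<noteq> 0" using a(2) by auto
  moreover have "coeff P n \<in> K_series" for n
    unfolding coeff_P using a(1) y by (intro K_series_diff K_series_sum) (auto simp: K_series_zero)
  moreover have "poly P x = 0" by (simp add: P_def poly_sum poly_monom)
  ultimately show ?thesis by (rule hcoeff_mem_barK_if_poly_root)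
qed

lemma additively_algebraic_if_K_series: "x \<in> K_series \<Longrightarrow> additively_algebraic p x"
  unfolding additively_algebraic_def
  by (intro exI[of _ 0] exI[of _ "\<lambda>_. 1"]) (simp add: K_series_one)

lemma power_diff_CHAR_power:
  assumes "prime p" "CHAR('a::comm_ring_1) = p"
  shows "(u - v :: 'a) ^ p ^ k = u ^ p ^ k - v ^ p ^ k"
proof -
  have "u ^ p ^ k = ((u - v) + v) ^ p ^ k" by simp
  also have "\<dots> = (u - v) ^ p ^ k + v ^ p ^ k" using assms by (intro freshmans_dream') auto
  finally show ?thesis by (simp add: algebra_simps)
qed

lemma sum_additive_compose:
  assumes "prime p" "CHAR('a::comm_ring_1) = p"
  shows "(\<Sum>k\<le>L. a k * (b * x ^ p - b ^ p * x) ^ p ^ k :: 'a)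
    = (\<Sum>k\<le>Suc L. ((if k = 0 then 0 else a (k - 1) * b ^ p ^ (k - 1))
                    - (if k \<le> L then a k * b ^ p ^ Suc k else 0)) * x ^ p ^ k)"
proof -
  have frob: "(b * x ^ p - b ^ p * x) ^ p ^ k = b ^ p ^ k * x ^ p ^ Suc k - b ^ p ^ Suc k * x ^ p ^ k" for k
    by (simp add: power_diff_CHAR_power[OF assms] power_mult_distrib flip: power_mult)
  have "(\<Sum>k\<le>L. a k * (b * x ^ p - b ^ p * x) ^ p ^ k)
      = (\<Sum>k\<le>L. a k * b ^ p ^ k * x ^ p ^ Suc k) - (\<Sum>k\<le>L. a k * b ^ p ^ Suc k * x ^ p ^ k)"
    by (simp add: frob sum_subtractf right_diff_distrib mult.assoc)
  also have "(\<Sum>k\<le>L. a k * b ^ p ^ k * x ^ p ^ Suc k)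
      = (\<Sum>k\<le>Suc L. (if k = 0 then 0 else a (k - 1) * b ^ p ^ (k - 1)) * x ^ p ^ k)"
    by (simp add: sum.atMost_shift lessThan_Suc_atMost)
  also have "(\<Sum>k\<le>L. a k * b ^ p ^ Suc k * x ^ p ^ k)
      = (\<Sum>k\<le>Suc L. (if k \<le> L then a k * b ^ p ^ Suc k else 0) * x ^ p ^ k)"
    by (simp add: sum.atMost_Suc)
  finally show ?thesis by (simp add: sum_subtractf left_diff_distrib)
qed

lemma additively_algebraic_compose:
  fixes x b :: "'f::idom hahn_series"
  assumes "prime p" "CHAR('f) = p" and b: "b \<in> K_series" "b \<noteq> 0"
    and "additively_algebraic p (b * x ^ p - b ^ p * x)"
  shows "additively_algebraic p x"
proof -
  obtain L a where a: "\<And>k. k \<le> L \<Longrightarrow> a k \<in> K_series" "a L \<noteq> 0"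
    and y: "(\<Sum>k\<le>L. a k * (b * x ^ p - b ^ p * x) ^ p ^ k) \<in> K_series"
    using assms(5) unfolding additively_algebraic_def by blast
  define a' where "a' k = (if k = 0 then 0 else a (k - 1) * b ^ p ^ (k - 1))
    - (if k \<le> L then a k * b ^ p ^ Suc k else 0)" for k
  have "\<forall>k\<le>Suc L. a' k \<in> K_series"
    using a(1) b(1) by (auto simp: a'_def intro!: K_series_diff K_series_mult K_series_power K_series_zero K_series_uminus)
  moreover have "a' (Suc L) \<noteq> 0" using a(2) b(2) by (simp add: a'_def)
  moreover have "(\<Sum>k\<le>Suc L. a' k * x ^ p ^ k) \<in> K_series"
    using y assms(1,2) unfolding a'_def by (simp add: sum_additive_compose CHAR_hahn_series)
  ultimately show ?thesis unfolding additively_algebraic_def by blast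
qed

section \<open>The Artin-Schreier tower\<close>

definition tower :: "nat \<Rightarrow> nat \<Rightarrow> 'f::comm_ring_1 hahn_series" where
  "tower p m = Abs_hahn_series (case m of 0 \<Rightarrow> hmono 1 (- 1) | Suc k \<Rightarrow> s_m p k)"

lemma hcoeff_tower_0: "hcoeff (tower p 0) = hmono 1 (- 1)"
  by (simp add: tower_def)

lemma hcoeff_tower_Suc: "p \<ge> 2 \<Longrightarrow> hcoeff (tower p (Suc m)) = s_m p m"
  by (simp add: tower_def hcoeff_Abs s_m_hahn)

lemma tower_0_mem_K_series: "tower p 0 \<in> K_series"
  using K_series_monomial[of 1 "- 1"] by (simp add: tower_def)

lemma delta_0_divide: "delta p 0 j / of_nat p = delta p 0 (Suc j)"
  by (simp add: delta_def)

lemma delta_0_neq_minus_one: "p \<ge> 2 \<Longrightarrow> delta p 0 j \<noteq> - 1"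
  using delta_weight_bounds(2)[of p j] unfolding delta_def by fastforce

lemma s_m_power_CHAR:
  assumes "prime p" "CHAR('f::comm_ring_1) = p"
  shows "(s_m p m q :: 'f) ^ p = s_m p m q"
proof (cases "\<exists>j. q = delta p 0 j")
  case True
  then obtain j where "q = delta p 0 j" by blast
  then show ?thesis
    by (simp add: s_m_at_delta[OF prime_ge_2_nat[OF assms(1)]] of_nat_power_CHAR[OF assms])
next
  case False
  then have "(s_m p m q :: 'f) = 0" by (intro s_m_eq_0) auto
  then show ?thesis using prime_gt_0_nat[OF assms(1)] by (simp add: power_0_left)
qed

lemma divide_eq_delta_0_imp:
  assumes p: "p \<ge> 2" and "q / of_nat p = delta p 0 j"
  shows "q = - 1 \<or> (\<exists>j'. q = delta p 0 j')"
proof -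
  have q: "q = of_nat p * delta p 0 j" using assms by (simp add: field_simps)
  show ?thesis
  proof (cases j)
    case 0
    then show ?thesis using q p by (simp add: delta_def)
  next
    case (Suc j')
    then have "q = delta p 0 j'" using q p by (simp add: delta_def)
    then show ?thesis by blast
  qed
qed

text \<open>With \<open>s\<^sub>-\<^sub>1 = t\<^sup>-\<^sup>1\<close> this is Pascal's rule for the coefficients of \<open>s\<^sub>m\<^sup>p = s\<^sub>m + s\<^sub>m\<^sub>-\<^sub>1\<close>.\<close>

lemma s_m_at_divide:
  assumes p: "p \<ge> 2"
  shows "s_m p m (q / of_nat p) = s_m p m q + (hcoeff (tower p m) q :: 'f::comm_ring_1)"
proof -
  consider (minus_one) "q = - 1" | (delta) j where "q = delta p 0 j"
    | (other) "q \<noteq> - 1" "\<And>j. q \<noteq> delta p 0 j" by blast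
  then show ?thesis
  proof cases
    case minus_one
    have off: "(s_m p k (- 1) :: 'f) = 0" for k
      by (rule s_m_eq_0) (use delta_0_neq_minus_one[OF p] in metis)
    have "q / of_nat p = delta p 0 0" using minus_one by (simp add: delta_def)
    then show ?thesis using minus_one
      by (cases m) (simp_all add: off s_m_at_delta[OF p] hcoeff_tower_0 hcoeff_tower_Suc[OF p] hmono_def)
  next
    case delta
    then have "q / of_nat p = delta p 0 (Suc j)" by (simp add: delta_0_divide)
    then show ?thesis using delta delta_0_neq_minus_one[OF p, of j]
      by (cases m) (simp_all add: s_m_at_delta[OF p] hcoeff_tower_0 hcoeff_tower_Suc[OF p] hmono_def)
  next
    case other
    then have "q / of_nat p \<noteq> delta p 0 j" for j using divide_eq_delta_0_imp[OF p] by blast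
    then show ?thesis using other
      by (cases m) (simp_all add: s_m_eq_0 hcoeff_tower_0 hcoeff_tower_Suc[OF p] hmono_def)
  qed
qed

lemma tower_Suc_power:
  assumes "prime p" "CHAR('f::comm_ring_1) = p"
  shows "tower p (Suc m) ^ p = tower p (Suc m) + (tower p m :: 'f hahn_series)"
proof (rule hcoeff_inject[THEN iffD1], rule ext)
  fix q
  have p: "p \<ge> 2" using assms(1) by (rule prime_ge_2_nat)
  have "hcoeff (tower p (Suc m) ^ p :: 'f hahn_series) q = s_m p m (q / of_nat p)"
    by (simp add: hcoeff_power_CHAR[OF assms] hcoeff_tower_Suc[OF p] s_m_power_CHAR[OF assms])
  also have "\<dots> = hcoeff (tower p (Suc m) + tower p m :: 'f hahn_series) q"
    by (simp add: s_m_at_divide[OF p] plus_hahn_series.rep_eq hadd_def hcoeff_tower_Suc[OF p])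
  finally show "hcoeff (tower p (Suc m) ^ p) q = hcoeff (tower p (Suc m) + tower p m :: 'f hahn_series) q" .
qed

text \<open>The additive operator \<open>y \<mapsto> b y\<^sup>p - b\<^sup>p y\<close> with \<open>b\<close> the top coefficient removes
  the top element of the tower from a \<open>K\<close>-linear combination.\<close>

lemma tower_combination_step:
  fixes \<beta> :: "nat \<Rightarrow> 'f::comm_ring_1 hahn_series" and \<kappa> :: "'f hahn_series" and N :: nat
  assumes "prime p" "CHAR('f) = p"
  defines "x \<equiv> (\<Sum>m\<le>N. \<beta> m * tower p (Suc m)) + \<kappa>"
  shows "\<beta> N * x ^ p - \<beta> N ^ p * x
    = (\<Sum>m<N. (\<beta> N * \<beta> m ^ p - \<beta> N ^ p * \<beta> m + \<beta> N * \<beta> (Suc m) ^ p) * tower p (Suc m))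
      + (\<beta> N * \<beta> 0 ^ p * tower p 0 + \<beta> N * \<kappa> ^ p - \<beta> N ^ p * \<kappa>)"
proof -
  define b where "b = \<beta> N"
  have char: "prime CHAR('f hahn_series)" "p = CHAR('f hahn_series)"
    using assms by (simp_all add: CHAR_hahn_series)
  have "x ^ p = (\<Sum>m\<le>N. (\<beta> m * tower p (Suc m)) ^ p) + \<kappa> ^ p"
    unfolding x_def using char by (simp add: freshmans_dream freshmans_dream_sum)
  also have "\<dots> = (\<Sum>m\<le>N. \<beta> m ^ p * tower p (Suc m)) + (\<Sum>m\<le>N. \<beta> m ^ p * tower p m) + \<kappa> ^ p"
    by (simp add: power_mult_distrib tower_Suc_power[OF assms(1,2)] distrib_left sum.distrib)
  finally have xp: "x ^ p = \<dots>" .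
  have lin: "(\<Sum>m\<le>N. (b * \<beta> m ^ p - b ^ p * \<beta> m) * tower p (Suc m))
      = b * (\<Sum>m\<le>N. \<beta> m ^ p * tower p (Suc m)) - b ^ p * (\<Sum>m\<le>N. \<beta> m * tower p (Suc m))"
    by (simp add: sum_distrib_left left_diff_distrib sum_subtractf mult.assoc)
  have top: "(\<Sum>m\<le>N. (b * \<beta> m ^ p - b ^ p * \<beta> m) * tower p (Suc m))
      = (\<Sum>m<N. (b * \<beta> m ^ p - b ^ p * \<beta> m) * tower p (Suc m))"
    by (simp add: b_def mult.commute flip: lessThan_Suc_atMost)
  have shift: "(\<Sum>m\<le>N. \<beta> m ^ p * tower p m) = \<beta> 0 ^ p * tower p 0 + (\<Sum>m<N. \<beta> (Suc m) ^ p * tower p (Suc m))"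
    by (rule sum.atMost_shift)
  have "b * x ^ p - b ^ p * x = (\<Sum>m\<le>N. (b * \<beta> m ^ p - b ^ p * \<beta> m) * tower p (Suc m))
      + b * (\<Sum>m\<le>N. \<beta> m ^ p * tower p m) + (b * \<kappa> ^ p - b ^ p * \<kappa>)"
    unfolding lin xp by (simp add: x_def algebra_simps)
  also have "\<dots> = (\<Sum>m<N. (b * \<beta> m ^ p - b ^ p * \<beta> m) * tower p (Suc m))
      + b * (\<Sum>m<N. \<beta> (Suc m) ^ p * tower p (Suc m))
      + (b * \<beta> 0 ^ p * tower p 0 + b * \<kappa> ^ p - b ^ p * \<kappa>)"
    unfolding top shift by (simp add: algebra_simps)
  also have "(\<Sum>m<N. (b * \<beta> m ^ p - b ^ p * \<beta> m) * tower p (Suc m))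
      + b * (\<Sum>m<N. \<beta> (Suc m) ^ p * tower p (Suc m))
      = (\<Sum>m<N. (b * \<beta> m ^ p - b ^ p * \<beta> m + b * \<beta> (Suc m) ^ p) * tower p (Suc m))"
    unfolding sum_distrib_left sum.distrib[symmetric] by (rule sum.cong) (simp_all add: algebra_simps)
  finally show ?thesis by (simp only: b_def)
qed

lemma additively_algebraic_tower_combination:
  fixes \<beta> :: "nat \<Rightarrow> 'f::idom hahn_series"
  assumes "prime p" "CHAR('f) = p" "\<And>m. \<beta> m \<in> K_series" "\<kappa> \<in> K_series"
  shows "additively_algebraic p ((\<Sum>m<N. \<beta> m * tower p (Suc m)) + \<kappa>)"
  using assms(3,4)
proof (induction N arbitrary: \<beta> \<kappa>)
  case 0
  then show ?case by (simp add: additively_algebraic_if_K_series)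
next
  case (Suc N)
  define x where "x = (\<Sum>m<Suc N. \<beta> m * tower p (Suc m)) + \<kappa>"
  show ?case
  proof (cases "\<beta> N = 0")
    case True
    then show ?thesis using Suc.IH[OF Suc.prems] by simp
  next
    case False
    define \<gamma> where "\<gamma> m = \<beta> N * \<beta> m ^ p - \<beta> N ^ p * \<beta> m + \<beta> N * \<beta> (Suc m) ^ p" for m
    define \<kappa>' where "\<kappa>' = \<beta> N * \<beta> 0 ^ p * tower p 0 + \<beta> N * \<kappa> ^ p - \<beta> N ^ p * \<kappa>"
    have "\<beta> N * x ^ p - \<beta> N ^ p * x = (\<Sum>m<N. \<gamma> m * tower p (Suc m)) + \<kappa>'"
      unfolding x_def \<gamma>_def \<kappa>'_def lessThan_Suc_atMost by (rule tower_combination_step[OF assms(1,2)])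
    moreover have "additively_algebraic p ((\<Sum>m<N. \<gamma> m * tower p (Suc m)) + \<kappa>')"
      using Suc.prems by (intro Suc.IH)
        (auto simp: \<gamma>_def \<kappa>'_def intro!: K_series_add K_series_diff K_series_mult K_series_power
          tower_0_mem_K_series)
    ultimately have "additively_algebraic p (\<beta> N * x ^ p - \<beta> N ^ p * x)" by simp
    then show ?thesis unfolding x_def[symmetric]
      by (rule additively_algebraic_compose[OF assms(1,2) Suc.prems(1) False])
  qed
qed

lemma hneg_s_trunc_diag:
  assumes "p \<ge> 2"
  shows "hneg (s_trunc p N N)
    = hcoeff (\<Sum>m<N. Abs_hahn_series (hmono (- 1) (of_nat m)) * tower p (Suc m) :: 'f::comm_ring_1 hahn_series)"
  by (simp add: s_trunc_eq hneg_def hadd_def hsum_finite hcoeff_sum times_hahn_series.rep_eq hmul_hmono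
      hcoeff_tower_Suc[OF assms] sum_negf fun_eq_iff)

lemma hneg_s_trunc_diag_mem_barK:
  assumes "prime p" "CHAR('f::idom) = p"
  shows "hneg (s_trunc p N N :: 'f hser) \<in> barK"
proof -
  have "additively_algebraic p ((\<Sum>m<N. Abs_hahn_series (hmono (- 1) (of_nat m)) * tower p (Suc m)) + 0 :: 'f hahn_series)"
    using K_series_monomial[of "- 1" "int _"] K_series_zero
    by (intro additively_algebraic_tower_combination[OF assms]) simp_all
  then show ?thesis
    using hcoeff_mem_barK_if_additively_algebraic[OF prime_ge_2_nat[OF assms(1)]]
    by (simp add: hneg_s_trunc_diag[OF prime_ge_2_nat[OF assms(1)]])
qed

lemma hone_mem_barK: "(hone :: 'f::comm_ring_1 hser) \<in> barK"
  using hcoeff_mem_barK_if_additively_algebraic[of 2, OF _ additively_algebraic_if_K_series[OF K_series_one]]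
  by (simp add: one_hahn_series.rep_eq)

lemma heval_linear: "heval [a, hone] x = hadd a x"
proof -
  have "hmul x hzero = hzero" by (simp add: hmul_def hzero_def)
  moreover have "hmul x hone = x" by (simp only: hmul_commute[of x hone] hmul_hone)
  ultimately show ?thesis by (simp add: heval_def hadd_def hzero_def)
qed

lemma v_s_linear: "v_s p [hneg c, hone] = hval (hadd (s_ser p) (hneg c))"
  by (simp add: v_s_def heval_linear hadd_def add.commute)

lemma v_ni_less_v_s_next_truncation:
  assumes p: "p \<ge> 2" and "CHAR('f::comm_ring_1) = p"
  shows "v_ni p n i [hneg (s_trunc p (Suc n) (Suc n) :: 'f hser), hone]
    < v_s p [hneg (s_trunc p (Suc n) (Suc n)), hone]"
proof -
  have "(Suc n, Suc n) \<in> S_set p" using p by (simp add: S_set_def)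
  moreover have less: "delta p n i < delta p (Suc n) (Suc n)" by (simp add: delta_less_iff[OF p])
  ultimately have "v_ni p n i [hneg (s_trunc p (Suc n) (Suc n) :: 'f hser), hone]
      = ereal (real_of_rat (delta p n i))"
    using v_ni_linear[OF p assms(2)] by simp
  also have "\<dots> < ereal (real_of_rat (delta p (Suc n) (Suc n)))" using less by (simp add: of_rat_less)
  also have "\<dots> \<le> v_s p [hneg (s_trunc p (Suc n) (Suc n)), hone]"
    unfolding v_s_linear by (rule hval_s_ser_minus_s_trunc[OF p])
  finally show ?thesis .
qed

theorem lemma2p4:
  fixes p :: nat
    and F :: "'f::alg_closed_field itself"
  assumes "prime p"
    and "CHAR('f) = p"
    and "\<forall>a::'f. \<exists>q::'f poly. q \<noteq> 0 \<and> (\<forall>k. coeff q k \<in> range of_nat) \<and> poly q a = 0"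
  shows "(\<forall>(n, i)\<in>S_set p. \<forall>(m, j)\<in>S_set p.
            v_ni p n i [hneg (s_trunc p m j :: 'f hser), hone]
              = ereal (real_of_rat (min (delta p n i) (delta p m j))))
       \<and> (\<forall>(n, i)\<in>S_set p. val_less (v_ni p n i :: 'f hser list \<Rightarrow> ereal) (v_s p))"
proof -
  have p: "p \<ge> 2" using assms(1) by (rule prime_ge_2_nat)
  have "val_less (v_ni p n i :: 'f hser list \<Rightarrow> ereal) (v_s p)" for n i
  proof -
    have "val_le (v_ni p n i :: 'f hser list \<Rightarrow> ereal) (v_s p)"
      using v_ni_le_v_s[OF p] by (auto simp: val_le_def barK_polys_def barK_def)
    moreover have "[hneg (s_trunc p (Suc n) (Suc n)), hone :: 'f hser] \<in> barK_polys"
      using hneg_s_trunc_diag_mem_barK[OF assms(1,2)] hone_mem_barK by (simp add: barK_polys_def)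
    ultimately show ?thesis
      using v_ni_less_v_s_next_truncation[OF p assms(2), of n i] unfolding val_less_def by force
  qed
  then show ?thesis using v_ni_linear[OF p assms(2)] by blast
qed

end
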